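(* Let $k\ge1$ and let $\Gamma$ be a graph with minimum degree $k$. Then $\Gamma$ has a $k$-factor if and only if the inequality $$k|S|+\sum_{v\in T_H}(d_{\Gamma}(v)-k)\ \ge\ q(S,T)+e(S,T)$$ holds for every pair of disjoint sets $S,T\subseteq V(\Gamma)$ satisfying: (M1) $S\subseteq H$; and (M2) every component $Q$ counted by $q(S,T)$ satisfies $Q\cap H\neq\emptyset$.
   Context: A $k$-factor is a $k$-regular spanning subgraph. $H=H(\Gamma)$ is the set of vertices $v$ with $d_\Gamma(v)\ge k+1$ ("high vertices"), and $T_H=T\cap H$. For disjoint $S,T\subseteq V(\Gamma)$, $e(S,T)$ is the number of edges of $\Gamma$ between $S$ and $T$, and $q(S,T)$ is the number of connected components $Q$ of $\Gamma\setminus(S\cup T)$ such that $k|Q|$ and $e(Q,T)$ have different parity (these are the components "counted by $q(S,T)$"). *)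

theory Defs
  imports Main
begin

definition graph :: "'a set \<Rightarrow> ('a \<Rightarrow> 'a \<Rightarrow> bool) \<Rightarrow> bool" where
  "graph V E \<longleftrightarrow> finite V \<and> (\<forall>u v. E u v \<longrightarrow> u \<in> V \<and> v \<in> V)
     \<and> (\<forall>u v. E u v \<longrightarrow> E v u) \<and> (\<forall>v. \<not> E v v)"

definition degree :: "'a set \<Rightarrow> ('a \<Rightarrow> 'a \<Rightarrow> bool) \<Rightarrow> 'a \<Rightarrow> nat" where
  "degree V E v = card {u \<in> V. E v u}"

definition min_degree_eq :: "'a set \<Rightarrow> ('a \<Rightarrow> 'a \<Rightarrow> bool) \<Rightarrow> nat \<Rightarrow> bool" where
  "min_degree_eq V E k \<longleftrightarrow> (\<forall>v\<in>V. degree V E v \<ge> k) \<and> (\<exists>v\<in>V. degree V E v = k)"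

definition has_k_factor :: "'a set \<Rightarrow> ('a \<Rightarrow> 'a \<Rightarrow> bool) \<Rightarrow> nat \<Rightarrow> bool" where
  "has_k_factor V E k \<longleftrightarrow> (\<exists>F. (\<forall>u v. F u v \<longrightarrow> E u v) \<and> graph V F
       \<and> (\<forall>v\<in>V. degree V F v = k))"

definition high :: "'a set \<Rightarrow> ('a \<Rightarrow> 'a \<Rightarrow> bool) \<Rightarrow> nat \<Rightarrow> 'a set" where
  "high V E k = {v \<in> V. degree V E v \<ge> k + 1}"

definition edges_between :: "('a \<Rightarrow> 'a \<Rightarrow> bool) \<Rightarrow> 'a set \<Rightarrow> 'a set \<Rightarrow> nat" where
  "edges_between E S T = card {(s, t). s \<in> S \<and> t \<in> T \<and> E s t}"

definition components :: "'a set \<Rightarrow> ('a \<Rightarrow> 'a \<Rightarrow> bool) \<Rightarrow> 'a set set" where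
  "components W E = {C. \<exists>v\<in>W. C = {u \<in> W. (\<lambda>x y. x \<in> W \<and> y \<in> W \<and> E x y)\<^sup>*\<^sup>* v u}}"

definition odd_comps :: "'a set \<Rightarrow> ('a \<Rightarrow> 'a \<Rightarrow> bool) \<Rightarrow> nat \<Rightarrow> 'a set \<Rightarrow> 'a set \<Rightarrow> 'a set set" where
  "odd_comps V E k S T = {Q \<in> components (V - (S \<union> T)) E.
       odd (k * card Q + edges_between E Q T)}"

definition q :: "'a set \<Rightarrow> ('a \<Rightarrow> 'a \<Rightarrow> bool) \<Rightarrow> nat \<Rightarrow> 'a set \<Rightarrow> 'a set \<Rightarrow> nat" where
  "q V E k S T = card (odd_comps V E k S T)"

end

theory Submission
  imports Defs
begin

lemma graphD:
  assumes "graph V E"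
  shows "finite V" and "symp E" and "irreflp E" and "\<And>u v. E u v \<Longrightarrow> u \<in> V \<and> v \<in> V"
  using assms unfolding graph_def symp_def irreflp_def by auto

definition induced_adj :: "'a set \<Rightarrow> ('a \<Rightarrow> 'a \<Rightarrow> bool) \<Rightarrow> 'a \<Rightarrow> 'a \<Rightarrow> bool" where
  "induced_adj W E = (\<lambda>x y. x \<in> W \<and> y \<in> W \<and> E x y)"

definition component_of :: "'a set \<Rightarrow> ('a \<Rightarrow> 'a \<Rightarrow> bool) \<Rightarrow> 'a \<Rightarrow> 'a set" where
  "component_of W E v = {u \<in> W. (induced_adj W E)\<^sup>*\<^sup>* v u}"

definition adj_closed :: "'a set \<Rightarrow> ('a \<Rightarrow> 'a \<Rightarrow> bool) \<Rightarrow> 'a set \<Rightarrow> bool" where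
  "adj_closed W E K \<longleftrightarrow> (\<forall>x\<in>K. \<forall>y\<in>W. E x y \<longrightarrow> y \<in> K)"

lemma components_eq_image: "components W E = component_of W E ` W"
  unfolding components_def component_of_def induced_adj_def by auto

lemma component_of_self: "v \<in> W \<Longrightarrow> v \<in> component_of W E v"
  unfolding component_of_def by auto

lemma component_of_subset: "component_of W E v \<subseteq> W"
  unfolding component_of_def by auto

lemma component_of_in_components: "v \<in> W \<Longrightarrow> component_of W E v \<in> components W E"
  unfolding components_eq_image by auto

lemma component_of_eq:
  assumes "symp E" and "u \<in> component_of W E v"
  shows "component_of W E u = component_of W E v"
proof -
  have "symp (induced_adj W E)"
    using assms(1) unfolding induced_adj_def symp_def by auto
  then have "(induced_adj W E)\<^sup>*\<^sup>* u v" "(induced_adj W E)\<^sup>*\<^sup>* v u"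
    using assms(2) symp_rtranclp unfolding component_of_def by (auto dest: sympD)
  then show ?thesis
    unfolding component_of_def by (auto intro: rtranclp_trans)
qed

lemma components_eq_component_of:
  "symp E \<Longrightarrow> C \<in> components W E \<Longrightarrow> u \<in> C \<Longrightarrow> C = component_of W E u"
  unfolding components_eq_image using component_of_eq by fastforce

lemma components_disjoint:
  "symp E \<Longrightarrow> C \<in> components W E \<Longrightarrow> D \<in> components W E \<Longrightarrow> C \<inter> D \<noteq> {} \<Longrightarrow> C = D"
  by (metis components_eq_component_of disjoint_iff)

lemma pairwise_disjnt_components: "symp E \<Longrightarrow> pairwise disjnt (components W E)"
  unfolding pairwise_def disjnt_def using components_disjoint by blast

lemma components_subset: "C \<in> components W E \<Longrightarrow> C \<subseteq> W"
  unfolding components_eq_image component_of_def by auto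

lemma components_nonempty: "C \<in> components W E \<Longrightarrow> C \<noteq> {}"
  unfolding components_eq_image using component_of_self by fastforce

lemma Union_components: "\<Union> (components W E) = W"
  unfolding components_eq_image using component_of_self component_of_subset by fastforce

lemma finite_components: "finite W \<Longrightarrow> finite (components W E)"
  unfolding components_eq_image by simp

lemma finite_component: "finite W \<Longrightarrow> C \<in> components W E \<Longrightarrow> finite C"
  by (rule finite_subset[OF components_subset])

lemma card_eq_sum_card_components:
  assumes "symp E" and "finite W"
  shows "card W = (\<Sum>C\<in>components W E. card C)"
proof -
  have "card (\<Union> (components W E)) = (\<Sum>C\<in>components W E. card C)"
    using card_Union_disjoint[OF pairwise_disjnt_components[OF assms(1)] finite_component[OF assms(2)]] .
  then show ?thesis
    by (simp add: Union_components)
qed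

lemma reachable_within_adj_closed:
  assumes "(induced_adj W E)\<^sup>*\<^sup>* x y" and "adj_closed W E K" and "x \<in> K"
  shows "y \<in> K \<and> (induced_adj K E)\<^sup>*\<^sup>* x y"
  using assms(1)
proof (induction rule: rtranclp_induct)
  case (step y z)
  then have "z \<in> K"
    using assms(2) unfolding adj_closed_def induced_adj_def by auto
  with step have "induced_adj K E y z"
    unfolding induced_adj_def by simp
  with step \<open>z \<in> K\<close> show ?case
    by (meson rtranclp.rtrancl_into_rtrancl)
qed (use assms in simp)

lemma adj_closed_component_of: "adj_closed W E (component_of W E v)"
  unfolding adj_closed_def component_of_def
  by (auto elim: rtranclp.rtrancl_into_rtrancl simp: induced_adj_def)

lemma components_adj_closed: "C \<in> components W E \<Longrightarrow> adj_closed W E C"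
  unfolding components_eq_image using adj_closed_component_of by auto

lemma reachable_in_component:
  "symp E \<Longrightarrow> C \<in> components W E \<Longrightarrow> u \<in> C \<Longrightarrow> v \<in> C \<Longrightarrow> (induced_adj W E)\<^sup>*\<^sup>* u v"
  using components_eq_component_of unfolding component_of_def by fastforce

lemma components_connected:
  assumes "symp E" and C: "C \<in> components W E" and "u \<in> C" and "v \<in> C"
  shows "(induced_adj C E)\<^sup>*\<^sup>* u v"
  using reachable_within_adj_closed[OF reachable_in_component[OF assms] components_adj_closed[OF C]]
    assms(3) by blast

lemma reachable_mono:
  "(induced_adj W E)\<^sup>*\<^sup>* u v \<Longrightarrow> W \<subseteq> W' \<Longrightarrow> (induced_adj W' E)\<^sup>*\<^sup>* u v"
  by (rule rtranclp_mono[THEN predicate2D, rotated]) (auto simp: induced_adj_def)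

lemma mem_componentsI:
  assumes "K \<subseteq> W" and "v \<in> K" and "adj_closed W E K"
    and "\<And>u. u \<in> K \<Longrightarrow> (induced_adj W E)\<^sup>*\<^sup>* v u"
  shows "K \<in> components W E"
proof -
  have "component_of W E v \<subseteq> K"
    using reachable_within_adj_closed[OF _ assms(3,2)] unfolding component_of_def by blast
  moreover have "K \<subseteq> component_of W E v"
    using assms(1,4) unfolding component_of_def by auto
  ultimately show ?thesis
    using assms(1,2) unfolding components_eq_image by auto
qed

lemma components_Diff_component:
  assumes "symp E" and Q: "Q \<in> components W E"
  shows "components (W - Q) E = components W E - {Q}"
proof
  show sub: "components W E - {Q} \<subseteq> components (W - Q) E"
  proof
    fix C assume C': "C \<in> components W E - {Q}"
    then have C: "C \<in> components W E" by blast
    then have "C \<inter> Q = {}"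
      using C' components_disjoint[OF assms(1) C Q] by blast
    then have CWQ: "C \<subseteq> W - Q"
      using components_subset[OF C] by blast
    obtain v where v: "v \<in> C"
      using components_nonempty[OF C] by blast
    show "C \<in> components (W - Q) E"
    proof (rule mem_componentsI[OF CWQ v])
      show "adj_closed (W - Q) E C"
        using components_adj_closed[OF C] unfolding adj_closed_def by blast
      show "(induced_adj (W - Q) E)\<^sup>*\<^sup>* v u" if "u \<in> C" for u
        by (rule reachable_mono[OF components_connected[OF assms(1) C v that] CWQ])
    qed
  qed
  show "components (W - Q) E \<subseteq> components W E - {Q}"
  proof
    fix C assume C: "C \<in> components (W - Q) E"
    then obtain x where x: "x \<in> C" "x \<in> W" "x \<notin> Q"
      using components_nonempty[OF C] components_subset[OF C] by blast
    let ?D = "component_of W E x"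
    have D: "?D \<in> components W E - {Q}"
      using x component_of_self[OF x(2)] component_of_in_components[OF x(2)] by blast
    then have "C = ?D"
      using components_disjoint[OF assms(1) C, of ?D] sub x(1) component_of_self[OF x(2)] by blast
    with D show "C \<in> components W E - {Q}"
      by simp
  qed
qed

lemma even_card_if_involution:
  assumes "finite A" and "\<And>x. x \<in> A \<Longrightarrow> f x \<in> A \<and> f x \<noteq> x \<and> f (f x) = x"
  shows "even (card A)"
  using assms
proof (induction "card A" arbitrary: A rule: less_induct)
  case less
  show ?case
  proof (cases "A = {}")
    case False
    then obtain x where x: "x \<in> A" by auto
    let ?B = "A - {x, f x}"
    have fx: "f x \<in> A" "f x \<noteq> x" "f (f x) = x"
      using less.prems(2)[OF x] by auto
    then have sub: "{x, f x} \<subseteq> A"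
      using x by auto
    have card_B: "card ?B + 2 = card A"
      using card_Diff_subset[OF _ sub] card_mono[OF less.prems(1) sub] fx(2) by simp
    have "f y \<in> ?B \<and> f y \<noteq> y \<and> f (f y) = y" if y: "y \<in> ?B" for y
    proof -
      have fy: "f y \<in> A" "f y \<noteq> y" "f (f y) = y"
        using less.prems(2)[of y] y by auto
      moreover have "f y \<noteq> x" and "f y \<noteq> f x"
        using fx(3) fy(3) y by auto
      ultimately show ?thesis
        by blast
    qed
    then have "even (card ?B)"
      using less.hyps[of ?B] card_B less.prems(1) by simp
    with card_B show ?thesis
      by presburger
  qed simp
qed

lemma finite_edges_between_set:
  "finite A \<Longrightarrow> finite B \<Longrightarrow> finite {(a, b). a \<in> A \<and> b \<in> B \<and> P a b}"
  by (rule finite_subset[of _ "A \<times> B"]) auto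

lemma edges_between_eq_sum:
  assumes "finite A" and "finite B"
  shows "edges_between P A B = (\<Sum>a\<in>A. card {b \<in> B. P a b})"
proof -
  have "{(a, b). a \<in> A \<and> b \<in> B \<and> P a b} = Sigma A (\<lambda>a. {b \<in> B. P a b})"
    by auto
  then show ?thesis
    using assms by (simp add: edges_between_def card_SigmaI)
qed

lemma edges_between_eq_sum_degree:
  "finite V \<Longrightarrow> A \<subseteq> V \<Longrightarrow> edges_between P A V = (\<Sum>a\<in>A. degree V P a)"
  using edges_between_eq_sum[of A V P] finite_subset by (auto simp: degree_def)

lemma edges_between_Un_right:
  assumes "finite A" "finite B" "finite C" "B \<inter> C = {}"
  shows "edges_between P A (B \<union> C) = edges_between P A B + edges_between P A C"
proof -
  have "{b \<in> B \<union> C. P a b} = {b \<in> B. P a b} \<union> {b \<in> C. P a b}" for a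
    by auto
  then have "card {b \<in> B \<union> C. P a b} = card {b \<in> B. P a b} + card {b \<in> C. P a b}" for a
    using assms by (simp add: card_Un_disjoint disjoint_iff)
  then show ?thesis
    using assms by (simp add: edges_between_eq_sum sum.distrib)
qed

lemma edges_between_Un_left:
  assumes "finite A" "finite B" "finite C" "A \<inter> B = {}"
  shows "edges_between P (A \<union> B) C = edges_between P A C + edges_between P B C"
  using assms by (simp add: edges_between_eq_sum sum.union_disjoint)

lemma edges_between_commute:
  assumes "symp P"
  shows "edges_between P A B = edges_between P B A"
proof -
  have "{(b, a). b \<in> B \<and> a \<in> A \<and> P b a} = prod.swap ` {(a, b). a \<in> A \<and> b \<in> B \<and> P a b}"
    using assms by (auto dest: sympD)
  then show ?thesis
    unfolding edges_between_def by (simp add: card_image)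
qed

lemma edges_between_singleton_left: "edges_between P {v} B = card {b \<in> B. P v b}"
proof -
  have "{(a, b). a \<in> {v} \<and> b \<in> B \<and> P a b} = Pair v ` {b \<in> B. P v b}"
    by auto
  then show ?thesis
    unfolding edges_between_def by (simp add: card_image inj_on_def)
qed

lemma edges_between_split:
  assumes "finite A" "finite B"
  shows "edges_between P A B
    = edges_between (\<lambda>x y. P x y \<and> F x y) A B + edges_between (\<lambda>x y. P x y \<and> \<not> F x y) A B"
proof -
  have "{b \<in> B. P a b} = {b \<in> B. P a b \<and> F a b} \<union> {b \<in> B. P a b \<and> \<not> F a b}" for a
    by auto
  then have "card {b \<in> B. P a b} = card {b \<in> B. P a b \<and> F a b} + card {b \<in> B. P a b \<and> \<not> F a b}"
    for a using assms by (simp add: card_Un_disjoint disjoint_iff)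
  then show ?thesis
    using assms by (simp add: edges_between_eq_sum sum.distrib)
qed

lemma even_edges_between_self:
  assumes "finite A" and "symp P" and "irreflp P"
  shows "even (edges_between P A A)"
  unfolding edges_between_def
proof (rule even_card_if_involution[where f = prod.swap])
  show "finite {(a, b). a \<in> A \<and> b \<in> A \<and> P a b}"
    by (rule finite_edges_between_set[OF assms(1,1)])
next
  fix p assume "p \<in> {(a, b). a \<in> A \<and> b \<in> A \<and> P a b}"
  then show "prod.swap p \<in> {(a, b). a \<in> A \<and> b \<in> A \<and> P a b} \<and> prod.swap p \<noteq> p
      \<and> prod.swap (prod.swap p) = p"
    using assms(2,3) by (cases p) (auto simp: symp_def irreflp_def)
qed

lemma edges_between_Union_components:
  assumes "symp E" and "finite W" and "finite B"
  shows "edges_between P W B = (\<Sum>Q\<in>components W E. edges_between P Q B)"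
proof -
  have "edges_between P W B = (\<Sum>a\<in>\<Union> (components W E). card {b \<in> B. P a b})"
    using assms by (simp add: edges_between_eq_sum Union_components)
  also have "\<dots> = (\<Sum>Q\<in>components W E. \<Sum>a\<in>Q. card {b \<in> B. P a b})"
    using finite_component[OF assms(2)] components_disjoint[OF assms(1)]
    by (subst sum.Union_disjoint) (auto, blast+)
  also have "\<dots> = (\<Sum>Q\<in>components W E. edges_between P Q B)"
    using finite_component[OF assms(2)] assms(3)
    by (intro sum.cong) (simp_all add: edges_between_eq_sum)
  finally show ?thesis .
qed

definition perfect_matching :: "'a set \<Rightarrow> ('a \<Rightarrow> 'a \<Rightarrow> bool) \<Rightarrow> ('a \<Rightarrow> 'a) \<Rightarrow> bool" where
  "perfect_matching A E m \<longleftrightarrow> (\<forall>v\<in>A. m v \<in> A \<and> m v \<noteq> v \<and> m (m v) = v \<and> E v (m v))"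

definition has_perfect_matching :: "'a set \<Rightarrow> ('a \<Rightarrow> 'a \<Rightarrow> bool) \<Rightarrow> bool" where
  "has_perfect_matching A E \<longleftrightarrow> (\<exists>m. perfect_matching A E m)"

lemma perfect_matchingD:
  "perfect_matching A E m \<Longrightarrow> v \<in> A \<Longrightarrow> m v \<in> A \<and> m v \<noteq> v \<and> m (m v) = v \<and> E v (m v)"
  unfolding perfect_matching_def by blast

lemma perfect_matching_restrict:
  assumes "perfect_matching V E' m" and "C \<subseteq> V" and "\<And>v. v \<in> C \<Longrightarrow> m v \<in> C \<and> E v (m v)"
  shows "perfect_matching C E m"
  using assms unfolding perfect_matching_def by blast

lemma has_perfect_matching_empty: "has_perfect_matching {} E"
  unfolding has_perfect_matching_def perfect_matching_def by simp

lemma has_perfect_matching_pair: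
  assumes "E x y" and "E y x" and "x \<noteq> y"
  shows "has_perfect_matching {x, y} E"
  unfolding has_perfect_matching_def perfect_matching_def
  using assms by (intro exI[of _ "\<lambda>v. if v = x then y else x"]) auto

lemma has_perfect_matching_Un:
  assumes "A \<inter> B = {}" and "has_perfect_matching A E" and "has_perfect_matching B E"
  shows "has_perfect_matching (A \<union> B) E"
proof -
  obtain mA mB where "perfect_matching A E mA" and "perfect_matching B E mB"
    using assms(2,3) unfolding has_perfect_matching_def by blast
  then have "perfect_matching (A \<union> B) E (\<lambda>v. if v \<in> A then mA v else mB v)"
    using assms(1) unfolding perfect_matching_def by auto
  then show ?thesis
    unfolding has_perfect_matching_def by blast
qed

lemma has_perfect_matching_Union:
  assumes "pairwise disjnt P" and "\<And>A. A \<in> P \<Longrightarrow> has_perfect_matching A E"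
  shows "has_perfect_matching (\<Union>P) E"
proof -
  have "\<forall>A\<in>P. \<exists>m. perfect_matching A E m"
    using assms(2) unfolding has_perfect_matching_def by blast
  then obtain f where f: "\<And>A. A \<in> P \<Longrightarrow> perfect_matching A E (f A)"
    by (metis bchoice)
  define m where "m v = f (SOME A. A \<in> P \<and> v \<in> A) v" for v
  have m: "m v = f A v" if "A \<in> P" and "v \<in> A" for A v
  proof -
    have "(SOME A. A \<in> P \<and> v \<in> A) = A"
    proof (rule some_equality)
      show "A \<in> P \<and> v \<in> A"
        using that by blast
      show "B = A" if "B \<in> P \<and> v \<in> B" for B
        using that \<open>A \<in> P\<close> \<open>v \<in> A\<close> assms(1) unfolding pairwise_def disjnt_def by blast
    qed
    then show ?thesis
      unfolding m_def by simp
  qed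
  have "perfect_matching (\<Union>P) E m"
    unfolding perfect_matching_def
  proof
    fix v assume "v \<in> \<Union>P"
    then obtain A where A: "A \<in> P" "v \<in> A" by blast
    have fA: "f A v \<in> A \<and> f A v \<noteq> v \<and> f A (f A v) = v \<and> E v (f A v)"
      using perfect_matchingD[OF f[OF A(1)] A(2)] .
    then show "m v \<in> \<Union>P \<and> m v \<noteq> v \<and> m (m v) = v \<and> E v (m v)"
      using A(1) m[OF A] m[OF A(1), of "f A v"] by auto
  qed
  then show ?thesis
    unfolding has_perfect_matching_def by blast
qed

lemma has_perfect_matching_clique:
  assumes "finite A" and "even (card A)" and "\<And>x y. x \<in> A \<Longrightarrow> y \<in> A \<Longrightarrow> x \<noteq> y \<Longrightarrow> E x y"
  shows "has_perfect_matching A E"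
  using assms
proof (induction "card A" arbitrary: A rule: less_induct)
  case less
  show ?case
  proof (cases "A = {}")
    case False
    then obtain x where x: "x \<in> A" by auto
    have "card A \<noteq> 1"
      using less.prems(2) by auto
    then have "A \<noteq> {x}"
      by auto
    then obtain y where y: "y \<in> A" "y \<noteq> x"
      using x by blast
    let ?B = "A - {x, y}"
    have card_B: "card ?B + 2 = card A"
      using x y less.prems(1) card_mono[OF less.prems(1), of "{x, y}"] by (simp add: card_Diff_subset)
    have "even (card ?B)"
      using card_B less.prems(2) by presburger
    then have "has_perfect_matching ?B E"
      using card_B less.prems by (intro less.hyps) auto
    moreover have "has_perfect_matching {x, y} E"
      using x y less.prems(3) by (intro has_perfect_matching_pair) auto
    moreover have "A = {x, y} \<union> ?B"
      using x y by auto
    ultimately show ?thesis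
      using has_perfect_matching_Un[of "{x, y}" ?B E] by auto
  qed (simp add: has_perfect_matching_empty)
qed

definition odd_components :: "'a set \<Rightarrow> ('a \<Rightarrow> 'a \<Rightarrow> bool) \<Rightarrow> 'a set set" where
  "odd_components W E = {C \<in> components W E. odd (card C)}"

definition tutte_condition :: "'a set \<Rightarrow> ('a \<Rightarrow> 'a \<Rightarrow> bool) \<Rightarrow> bool" where
  "tutte_condition V E \<longleftrightarrow> (\<forall>X \<subseteq> V. card (odd_components (V - X) E) \<le> card X)"

lemma finite_odd_components: "finite W \<Longrightarrow> finite (odd_components W E)"
  by (simp add: odd_components_def finite_components)

lemma even_sum_iff_even_card_odd:
  fixes f :: "'b \<Rightarrow> nat"
  assumes "finite A"
  shows "even (sum f A) \<longleftrightarrow> even (card {x \<in> A. odd (f x)})"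
  using assms
proof (induction A rule: finite_induct)
  case (insert a A)
  have "{x \<in> insert a A. odd (f x)}
      = (if odd (f a) then insert a {x \<in> A. odd (f x)} else {x \<in> A. odd (f x)})"
    by auto
  with insert show ?case
    by auto
qed simp

lemma even_card_iff_even_card_odd_components:
  assumes "symp E" and "finite W"
  shows "even (card W) \<longleftrightarrow> even (card (odd_components W E))"
  using card_eq_sum_card_components[OF assms] even_sum_iff_even_card_odd[OF finite_components[OF assms(2)]]
  unfolding odd_components_def by simp

lemma component_of_mono:
  assumes "\<And>x y. E x y \<Longrightarrow> E' x y"
  shows "component_of W E v \<subseteq> component_of W E' v"
proof -
  have "induced_adj W E \<le> induced_adj W E'"
    using assms unfolding induced_adj_def by auto
  then show ?thesis
    unfolding component_of_def using rtranclp_mono by blast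
qed

lemma odd_component_contains_odd_component:
  assumes "symp E" and "symp E'" and "finite W" and E': "\<And>x y. E x y \<Longrightarrow> E' x y"
    and C': "C' \<in> odd_components W E'"
  shows "\<exists>C \<in> odd_components W E. C \<subseteq> C'"
proof (rule ccontr)
  assume none: "\<not> ?thesis"
  let ?A = "{C \<in> components W E. C \<subseteq> C'}"
  have C'_comp: "C' \<in> components W E'"
    using C' unfolding odd_components_def by blast
  have "C' = \<Union>?A"
  proof
    show "C' \<subseteq> \<Union>?A"
    proof
      fix x assume x: "x \<in> C'"
      then have xW: "x \<in> W"
        using components_subset[OF C'_comp] by blast
      have "component_of W E x \<subseteq> component_of W E' x"
        using component_of_mono E' by metis
      also have "\<dots> = C'"
        using components_eq_component_of[OF assms(2) C'_comp x] by simp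
      finally show "x \<in> \<Union>?A"
        using component_of_self[OF xW] component_of_in_components[OF xW] by blast
    qed
  qed blast
  moreover have "finite ?A"
    using finite_components[OF assms(3)] by simp
  then have "card (\<Union>?A) = (\<Sum>C\<in>?A. card C)"
    using pairwise_disjnt_components[OF assms(1)] finite_component[OF assms(3)]
    by (intro card_Union_disjoint) (auto simp: pairwise_def)
  moreover have "even (\<Sum>C\<in>?A. card C)"
    using none unfolding odd_components_def by (intro dvd_sum) auto
  ultimately show False
    using C' unfolding odd_components_def by simp
qed

lemma card_odd_components_antimono:
  assumes "symp E" and "symp E'" and "finite W" and "\<And>x y. E x y \<Longrightarrow> E' x y"
  shows "card (odd_components W E') \<le> card (odd_components W E)"
proof -
  have "\<forall>C'\<in>odd_components W E'. \<exists>C\<in>odd_components W E. C \<subseteq> C'"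
    using odd_component_contains_odd_component[OF assms] by blast
  then obtain g where g: "\<And>C'. C' \<in> odd_components W E' \<Longrightarrow> g C' \<in> odd_components W E \<and> g C' \<subseteq> C'"
    using bchoice by metis
  have "inj_on g (odd_components W E')"
  proof (rule inj_onI)
    fix C1 C2
    assume C: "C1 \<in> odd_components W E'" "C2 \<in> odd_components W E'" and "g C1 = g C2"
    have "g C1 \<noteq> {}"
      using g[OF C(1)] components_nonempty unfolding odd_components_def by blast
    then have "C1 \<inter> C2 \<noteq> {}"
      using g[OF C(1)] g[OF C(2)] \<open>g C1 = g C2\<close> by blast
    then show "C1 = C2"
      using components_disjoint[OF assms(2)] C unfolding odd_components_def by blast
  qed
  then show ?thesis
    using g finite_odd_components[OF assms(3)] by (intro card_inj_on_le) auto
qed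

lemma even_card_if_tutte_condition:
  assumes "graph V E" and "tutte_condition V E"
  shows "even (card V)"
proof -
  have "card (odd_components V E) = 0"
    using assms(2) unfolding tutte_condition_def by (metis Diff_empty card.empty empty_subsetI le_zero_eq)
  then show ?thesis
    using even_card_iff_even_card_odd_components[OF graphD(2,1)[OF assms(1)]] by simp
qed

definition add_edge :: "('a \<Rightarrow> 'a \<Rightarrow> bool) \<Rightarrow> 'a \<Rightarrow> 'a \<Rightarrow> 'a \<Rightarrow> 'a \<Rightarrow> bool" where
  "add_edge E a c = (\<lambda>x y. E x y \<or> (x = a \<and> y = c) \<or> (x = c \<and> y = a))"

lemma graph_add_edge: "graph V E \<Longrightarrow> a \<in> V \<Longrightarrow> c \<in> V \<Longrightarrow> a \<noteq> c \<Longrightarrow> graph V (add_edge E a c)"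
  unfolding graph_def add_edge_def by auto

lemma tutte_condition_add_edge:
  assumes "graph V E" and "tutte_condition V E"
  shows "tutte_condition V (add_edge E a c)"
  unfolding tutte_condition_def
proof (intro allI impI)
  fix X assume "X \<subseteq> V"
  have "symp (add_edge E a c)"
    using graphD(2)[OF assms(1)] unfolding add_edge_def symp_def by blast
  then have "card (odd_components (V - X) (add_edge E a c)) \<le> card (odd_components (V - X) E)"
    using graphD(1,2)[OF assms(1)] by (intro card_odd_components_antimono) (auto simp: add_edge_def)
  also have "\<dots> \<le> card X"
    using assms(2) \<open>X \<subseteq> V\<close> unfolding tutte_condition_def by blast
  finally show "card (odd_components (V - X) (add_edge E a c)) \<le> card X" .
qed

lemma perfect_matching_avoiding_added_edge:
  assumes "perfect_matching V (add_edge E a c) m" and "m a \<noteq> c"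
  shows "perfect_matching V E m"
  unfolding perfect_matching_def
proof
  fix v assume "v \<in> V"
  with assms show "m v \<in> V \<and> m v \<noteq> v \<and> m (m v) = v \<and> E v (m v)"
    unfolding perfect_matching_def add_edge_def by metis
qed

lemma has_perfect_matching_if_components_cliques:
  assumes "graph V E" and "tutte_condition V E"
    and S: "S = {v \<in> V. \<forall>w\<in>V. w \<noteq> v \<longrightarrow> E v w}"
    and cliques: "\<And>C x y. C \<in> components (V - S) E \<Longrightarrow> x \<in> C \<Longrightarrow> y \<in> C \<Longrightarrow> x \<noteq> y \<Longrightarrow> E x y"
  shows "has_perfect_matching V E"
proof -
  note fin = graphD(1)[OF assms(1)] and sym = graphD(2)[OF assms(1)]
  let ?O = "odd_components (V - S) E"
  let ?C = "components (V - S) E"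
  have SV: "S \<subseteq> V" and finS: "finite S"
    using S fin finite_subset by auto
  have "card ?O \<le> card S"
    using assms(2) SV unfolding tutte_condition_def by blast
  then obtain \<sigma> where \<sigma>: "\<sigma> ` ?O \<subseteq> S" "inj_on \<sigma> ?O"
    using card_le_inj finite_odd_components fin finS by (metis finite_Diff)
  have O_C: "?O \<subseteq> ?C"
    unfolding odd_components_def by blast
  define piece where "piece C = (if C \<in> ?O then insert (\<sigma> C) C else C)" for C
  define S' where "S' = S - \<sigma> ` ?O"
  have piece_clique: "E x y" if C: "C \<in> ?C" and xy: "x \<in> piece C" "y \<in> piece C" "x \<noteq> y" for C x y
  proof (cases "C \<in> ?O")
    case True
    have CV: "C \<subseteq> V"
      using components_subset[OF C] by blast
    have "\<sigma> C \<in> S"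
      using \<sigma>(1) True by blast
    have "E (\<sigma> C) w" if "w \<in> C" for w
    proof -
      have "w \<in> V" "w \<noteq> \<sigma> C"
        using that components_subset[OF C] \<open>\<sigma> C \<in> S\<close> by auto
      then show ?thesis
        using \<open>\<sigma> C \<in> S\<close> unfolding S by blast
    qed
    then have \<sigma>_adj: "E (\<sigma> C) w \<and> E w (\<sigma> C)" if "w \<in> C" for w
      using that sympD[OF sym] by blast
    have "x \<in> insert (\<sigma> C) C" "y \<in> insert (\<sigma> C) C"
      using xy True unfolding piece_def by auto
    then consider "x = \<sigma> C" "y \<in> C" | "y = \<sigma> C" "x \<in> C" | "x \<in> C" "y \<in> C"
      using xy(3) by blast
    then show ?thesis
      using \<sigma>_adj cliques[OF C _ _ xy(3)] by cases auto
  next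
    case False
    then show ?thesis
      using xy cliques[OF C] unfolding piece_def by simp
  qed
  have even_piece: "even (card (piece C))" if "C \<in> ?C" for C
  proof (cases "C \<in> ?O")
    case True
    then have "\<sigma> C \<notin> C"
      using \<sigma>(1) components_subset[OF that] by blast
    with True show ?thesis
      using finite_component[OF _ that] fin unfolding piece_def odd_components_def by simp
  next
    case False
    with that show ?thesis
      unfolding piece_def odd_components_def by simp
  qed
  have "card S = card S' + card ?O"
    using \<sigma> finS card_Diff_subset[of "\<sigma> ` ?O" S] card_mono[OF finS \<sigma>(1)] card_image[OF \<sigma>(2)]
    unfolding S'_def by (simp add: finite_subset)
  moreover have "card V = card S + card (V - S)"
    using card_Diff_subset[OF finS SV] card_mono[OF fin SV] by simp
  moreover have "even (card V)"
    using even_card_if_tutte_condition[OF assms(1,2)] .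
  ultimately have "even (card S')"
    using even_card_iff_even_card_odd_components[OF sym, of "V - S"] fin by auto
  have "V = \<Union>(insert S' (piece ` ?C))"
  proof
    show "V \<subseteq> \<Union>(insert S' (piece ` ?C))"
    proof
      fix v assume "v \<in> V"
      show "v \<in> \<Union>(insert S' (piece ` ?C))"
      proof (cases "v \<in> S")
        case True
        show ?thesis
        proof (cases "v \<in> \<sigma> ` ?O")
          case True
          then obtain C where "C \<in> ?O" "v = \<sigma> C" by blast
          then have "v \<in> piece C" and "C \<in> ?C"
            using O_C unfolding piece_def by auto
          then show ?thesis by blast
        next
          case False
          with \<open>v \<in> S\<close> show ?thesis
            unfolding S'_def by blast
        qed
      next
        case False
        then have "v \<in> \<Union>?C"
          using \<open>v \<in> V\<close> Union_components[of "V - S" E] by blast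
        then obtain C where "C \<in> ?C" "v \<in> C" by blast
        then have "v \<in> piece C"
          unfolding piece_def by simp
        with \<open>C \<in> ?C\<close> show ?thesis by blast
      qed
    qed
    have "piece C \<subseteq> V" if "C \<in> ?C" for C
      using components_subset[OF that] \<sigma>(1) SV unfolding piece_def by auto
    then show "\<Union>(insert S' (piece ` ?C)) \<subseteq> V"
      using SV unfolding S'_def by blast
  qed
  moreover have "pairwise disjnt (insert S' (piece ` ?C))"
  proof -
    have "disjnt (piece C) (piece D)" if "C \<in> ?C" "D \<in> ?C" "C \<noteq> D" for C D
    proof -
      have "C \<inter> D = {}"
        using components_disjoint[OF sym that(1,2)] that(3) by blast
      moreover have "\<sigma> C \<noteq> \<sigma> D" if "C \<in> ?O" "D \<in> ?O"
        using \<sigma>(2) that \<open>C \<noteq> D\<close> unfolding inj_on_def by blast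
      moreover have "\<sigma> C \<notin> D" if "C \<in> ?O"
        using that \<sigma>(1) components_subset[OF \<open>D \<in> ?C\<close>] by blast
      moreover have "\<sigma> D \<notin> C" if "D \<in> ?O"
        using that \<sigma>(1) components_subset[OF \<open>C \<in> ?C\<close>] by blast
      ultimately show ?thesis
        unfolding piece_def disjnt_def by auto
    qed
    moreover have "disjnt S' (piece C)" if "C \<in> ?C" for C
      using components_subset[OF that] unfolding S'_def piece_def disjnt_def by auto
    ultimately show ?thesis
      unfolding pairwise_def by (auto simp: disjnt_sym)
  qed
  moreover have "has_perfect_matching P E" if "P \<in> insert S' (piece ` ?C)" for P
    using that
  proof
    assume "P = S'"
    then show ?thesis
      using \<open>even (card S')\<close> finS S unfolding S'_def by (intro has_perfect_matching_clique) auto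
  next
    assume "P \<in> piece ` ?C"
    then obtain C where C: "C \<in> ?C" "P = piece C" by blast
    have "finite (piece C)"
      using finite_component[OF _ C(1)] fin unfolding piece_def by simp
    then show ?thesis
      using C even_piece piece_clique by (intro has_perfect_matching_clique) auto
  qed
  ultimately show ?thesis
    using has_perfect_matching_Union by metis
qed

lemma component_not_clique_obtains_path:
  assumes "symp E" and "C \<in> components W E" and "x \<in> C" "y \<in> C" "x \<noteq> y" "\<not> E x y"
  obtains z w where "z \<in> W" "w \<in> W" "E x z" "E z w" "\<not> E x w" "x \<noteq> w"
proof -
  let ?N = "{u. u = x \<or> E x u}"
  have "\<exists>z w. z \<in> ?N \<and> induced_adj W E z w \<and> w \<notin> ?N"
    if "(induced_adj W E)\<^sup>*\<^sup>* x u" "u \<notin> ?N" for u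
    using that by (induction rule: rtranclp_induct) blast+
  then obtain z w where "z \<in> ?N" "induced_adj W E z w" "w \<notin> ?N"
    using reachable_in_component[OF assms(1-4)] assms(5,6) by blast
  then have "z \<noteq> x"
    by (auto simp: induced_adj_def)
  with \<open>z \<in> ?N\<close> \<open>induced_adj W E z w\<close> \<open>w \<notin> ?N\<close> show ?thesis
    using that unfolding induced_adj_def by blast
qed

lemma edge_if_doubleton_eq: "symp E \<Longrightarrow> {x, y} = {u, w} \<Longrightarrow> E u w \<Longrightarrow> E x y"
  by (auto simp: doubleton_eq_iff dest: sympD)

locale matching_exchange =
  fixes V :: "'a set" and E :: "'a \<Rightarrow> 'a \<Rightarrow> bool" and a b c d :: 'a and m1 m2 :: "'a \<Rightarrow> 'a"
  assumes graph: "graph V E"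
    and in_V: "a \<in> V" "b \<in> V" "c \<in> V" "d \<in> V"
    and ab: "E a b" and bc: "E b c" and not_ac: "\<not> E a c" and not_bd: "\<not> E b d" and b_neq_d: "b \<noteq> d"
    and m1: "perfect_matching V (add_edge E a c) m1" and m1_a: "m1 a = c"
    and m2: "perfect_matching V (add_edge E b d) m2" and m2_b: "m2 b = d"
begin

lemma sym: "symp E"
  using graphD(2)[OF graph] .

lemma distinct: "a \<noteq> b" "a \<noteq> d" "c \<noteq> b" "c \<noteq> d" "b \<noteq> d"
  using ab bc not_bd b_neq_d graphD(3)[OF graph] sympD[OF sym ab] unfolding irreflp_def by auto

lemma m1D: "y \<in> V \<Longrightarrow> m1 y \<in> V \<and> m1 y \<noteq> y \<and> m1 (m1 y) = y \<and> add_edge E a c y (m1 y)"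
  using perfect_matchingD[OF m1] .

lemma m2D: "y \<in> V \<Longrightarrow> m2 y \<in> V \<and> m2 y \<noteq> y \<and> m2 (m2 y) = y \<and> add_edge E b d y (m2 y)"
  using perfect_matchingD[OF m2] .

lemma m2_d: "m2 d = b"
  using m2D[OF in_V(2)] m2_b by simp

primrec walk :: "nat \<Rightarrow> 'a" where
  "walk 0 = d"
| "walk (Suc n) = (if even n then m1 (walk n) else m2 (walk n))"

declare walk.simps(2) [simp del]

lemma walk_in_V: "walk n \<in> V"
  by (induction n) (use in_V m1D m2D in \<open>auto simp: walk.simps(2)\<close>)

lemma m1_walk: "m1 (walk j) = walk (if even j then Suc j else j - 1)"
proof (cases "even j")
  case False
  then have "j = Suc (j - 1)" and "even (j - 1)"
    by presburger+
  then have "walk j = m1 (walk (j - 1))"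
    by (metis walk.simps(2))
  with False show ?thesis
    using m1D[OF walk_in_V] by simp
qed (simp add: walk.simps(2))

lemma m2_walk: "0 < j \<Longrightarrow> m2 (walk j) = walk (if odd j then Suc j else j - 1)"
proof (cases "odd j")
  case False
  assume "0 < j"
  with False have "j = Suc (j - 1)" and "odd (j - 1)"
    by presburger+
  then have "walk j = m2 (walk (j - 1))"
    by (metis walk.simps(2))
  with False show ?thesis
    using m2D[OF walk_in_V] by simp
qed (simp add: walk.simps(2))

lemma m1_edge_is_step: "\<exists>k \<le> j. even k \<and> {walk j, m1 (walk j)} = {walk k, walk (Suc k)}"
proof (cases "even j")
  case False
  then have "Suc (j - 1) = j" and "even (j - 1)"
    by presburger+
  moreover have "{walk j, m1 (walk j)} = {walk (j - 1), walk j}"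
    using m1_walk[of j] False by (simp add: insert_commute)
  ultimately show ?thesis
    by (intro exI[of _ "j - 1"]) simp
next
  case True
  then show ?thesis
    using m1_walk[of j] by (intro exI[of _ j]) simp
qed

lemma m2_edge_is_step:
  assumes "0 < j"
  shows "\<exists>k \<le> j. odd k \<and> {walk j, m2 (walk j)} = {walk k, walk (Suc k)}"
proof (cases "odd j")
  case False
  with assms have "Suc (j - 1) = j" and "odd (j - 1)"
    by presburger+
  moreover have "{walk j, m2 (walk j)} = {walk (j - 1), walk j}"
    using m2_walk[OF assms] False by (simp add: insert_commute)
  ultimately show ?thesis
    by (intro exI[of _ "j - 1"]) simp
next
  case True
  then show ?thesis
    using m2_walk[OF assms] by (intro exI[of _ j]) simp
qed

definition new_edge_step :: "nat \<Rightarrow> bool" where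
  "new_edge_step n \<longleftrightarrow> {walk n, walk (Suc n)} = {a, c} \<or> {walk n, walk (Suc n)} = {b, d}"

lemma edge_if_not_new_edge_step: "\<not> new_edge_step n \<Longrightarrow> E (walk n) (walk (Suc n))"
  using m1D[OF walk_in_V, of n] m2D[OF walk_in_V, of n]
  unfolding new_edge_step_def add_edge_def by (auto simp: walk.simps(2) split: if_splits)

lemma new_edge_step_parity:
  assumes "new_edge_step n"
  shows "if even n then {walk n, walk (Suc n)} = {a, c} else {walk n, walk (Suc n)} = {b, d}"
proof -
  have "\<not> E a c" "\<not> E c a" "\<not> E b d" "\<not> E d b"
    using not_ac not_bd sympD[OF sym] by blast+
  then show ?thesis
    using assms distinct m1D[OF walk_in_V, of n] m2D[OF walk_in_V, of n]
    unfolding new_edge_step_def add_edge_def by (auto simp: doubleton_eq_iff walk.simps(2))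
qed

lemma b_mem_if_closed:
  assumes "C \<subseteq> V" and "d \<in> C" and m1_closed: "\<And>y. y \<in> C \<Longrightarrow> m1 y \<in> C"
    and m2_closed: "\<And>y. y \<in> C \<Longrightarrow> m2 y \<in> C \<or> m2 y = b"
  shows "b \<in> C"
proof (rule ccontr)
  assume "b \<notin> C"
  have fin: "finite C"
    using assms(1) graphD(1)[OF graph] finite_subset by blast
  have "even (card C)"
    using m1_closed m1D assms(1) by (intro even_card_if_involution[OF fin, of m1]) blast
  moreover have "even (card (C - {d}))"
  proof (rule even_card_if_involution[of _ m2])
    fix y assume y: "y \<in> C - {d}"
    have yV: "y \<in> V"
      using y assms(1) by blast
    then have "m2 y \<noteq> b" and "m2 y \<noteq> d"
      using y \<open>b \<notin> C\<close> m2_d m2_b m2D[OF yV] by auto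
    then show "m2 y \<in> C - {d} \<and> m2 y \<noteq> y \<and> m2 (m2 y) = y"
      using y m2_closed[of y] m2D[OF yV] by blast
  qed (use fin in simp)
  ultimately show False
    using card_Suc_Diff1[OF fin assms(2)] by (metis even_Suc)
qed

lemma exists_new_edge_step: "\<exists>n. new_edge_step n"
proof (rule ccontr)
  assume none: "\<nexists>n. new_edge_step n"
  have "b \<in> range walk"
  proof (rule b_mem_if_closed)
    show "range walk \<subseteq> V"
      using walk_in_V by blast
    show "d \<in> range walk"
      by (metis rangeI walk.simps(1))
    show "m1 y \<in> range walk" if "y \<in> range walk" for y
      using that m1_walk by auto
    show "m2 y \<in> range walk \<or> m2 y = b" if "y \<in> range walk" for y
    proof -
      obtain i where "y = walk i"
        using \<open>y \<in> range walk\<close> by blast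
      then show ?thesis
        using m2_walk[of i] m2_d by (cases "i = 0") auto
    qed
  qed
  then obtain j where j: "walk j = b" by blast
  then have "0 < j"
    using distinct(5) by (cases j) auto
  then obtain k where "{walk j, m2 (walk j)} = {walk k, walk (Suc k)}"
    using m2_edge_is_step by blast
  then have "new_edge_step k"
    using j m2_b unfolding new_edge_step_def by simp
  with none show False by blast
qed

definition first_new :: nat where
  "first_new = (LEAST n. new_edge_step n)"

lemma new_edge_step_first_new: "new_edge_step first_new"
  unfolding first_new_def using exists_new_edge_step by (rule LeastI_ex)

lemma first_new_le: "new_edge_step n \<Longrightarrow> first_new \<le> n"
  unfolding first_new_def by (rule Least_le)

lemma edge_before_first_new: "n < first_new \<Longrightarrow> E (walk n) (walk (Suc n))"
  using first_new_le edge_if_not_new_edge_step by (meson leD)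

definition visited :: "'a set" where
  "visited = walk ` {..first_new}"

lemma visited_subset: "visited \<subseteq> V"
  unfolding visited_def using walk_in_V by blast

lemma d_visited: "d \<in> visited"
  unfolding visited_def by (metis atMost_iff image_eqI le0 walk.simps(1))

lemma m1_c: "m1 c = a"
  using m1D[OF in_V(1)] m1_a by simp

lemma ac_walk_index:
  assumes "walk j \<in> {a, c}" and "j \<le> first_new"
  shows "j = first_new \<and> even first_new"
proof -
  obtain k where k: "k \<le> j" "even k" "{walk j, m1 (walk j)} = {walk k, walk (Suc k)}"
    using m1_edge_is_step by blast
  have "{walk j, m1 (walk j)} = {a, c}"
    using assms(1) m1_a m1_c by (auto simp: insert_commute)
  then have "{walk k, walk (Suc k)} = {a, c}"
    using k(3) by simp
  then have "first_new \<le> k"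
    by (intro first_new_le) (simp add: new_edge_step_def)
  with k(1) assms(2) have "k = first_new" "j = first_new"
    by linarith+
  with k(2) show ?thesis
    by simp
qed

lemma b_walk_index:
  assumes "walk j = b" and "j \<le> first_new"
  shows "j = first_new \<and> odd first_new"
proof -
  have "0 < j"
    using assms(1) distinct(5) by (metis gr0I walk.simps(1))
  then obtain k where k: "k \<le> j" "odd k" "{walk j, m2 (walk j)} = {walk k, walk (Suc k)}"
    using m2_edge_is_step by blast
  then have "first_new \<le> k"
    using assms(1) m2_b by (intro first_new_le) (simp add: new_edge_step_def)
  with k(1) assms(2) have "k = first_new" "j = first_new"
    by linarith+
  with k(2) show ?thesis
    by simp
qed

lemma has_perfect_matching_if_first_new_odd:
  assumes "odd first_new"
  shows "has_perfect_matching V E"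
proof -
  let ?t = first_new
  have "{walk ?t, walk (Suc ?t)} = {b, d}"
    using new_edge_step_parity[OF new_edge_step_first_new] assms by simp
  then have last_step: "walk (Suc ?t) \<in> {b, d}"
    by (metis insertCI)
  have m1_closed: "m1 y \<in> visited" if "y \<in> visited" for y
  proof -
    from that have "y \<in> walk ` {..?t}"
      unfolding visited_def .
    then obtain i where i: "i \<le> ?t" "y = walk i"
      by auto
    have "i \<noteq> ?t" if "even i"
      using that assms by auto
    then have "(if even i then Suc i else i - 1) \<le> ?t"
      using i(1) by auto
    then show ?thesis
      unfolding visited_def using m1_walk[of i] i(2) by (metis atMost_iff image_eqI)
  qed
  have m2_closed_or_b: "m2 y \<in> visited \<or> m2 y = b" if "y \<in> visited" for y
  proof -
    from that have "y \<in> walk ` {..?t}"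
      unfolding visited_def .
    then obtain i where i: "i \<le> ?t" "y = walk i"
      by auto
    show ?thesis
    proof (cases "i = 0")
      case True
      then show ?thesis
        using i m2_d by simp
    next
      case False
      then have m2y: "m2 y = walk (if odd i then Suc i else i - 1)"
        using i m2_walk by simp
      consider "odd i" "i = ?t" | "odd i" "Suc i \<le> ?t" | "even i"
        using i(1) by linarith
      then show ?thesis
      proof cases
        case 1
        then show ?thesis
          using m2y i last_step d_visited by auto
      next
        case 2
        then have "m2 y = walk (Suc i)"
          using m2y by simp
        with 2 show ?thesis
          unfolding visited_def by (metis atMost_iff image_eqI)
      next
        case 3
        then have "m2 y = walk (i - 1)"
          using m2y by simp
        with i(1) show ?thesis
          unfolding visited_def by (metis atMost_iff image_eqI diff_le_self order_trans)
      qed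
    qed
  qed
  have b_visited: "b \<in> visited"
    by (rule b_mem_if_closed[OF visited_subset d_visited m1_closed m2_closed_or_b])
  have m2_closed: "m2 y \<in> visited" if "y \<in> visited" for y
    using m2_closed_or_b[OF that] b_visited by auto
  have ac_not_visited: "a \<notin> visited" "c \<notin> visited"
    using ac_walk_index assms unfolding visited_def by blast+
  have "perfect_matching visited E m1"
  proof (rule perfect_matching_restrict[OF m1 visited_subset])
    fix y assume "y \<in> visited"
    moreover have "add_edge E a c y (m1 y)"
      using m1D visited_subset \<open>y \<in> visited\<close> by blast
    ultimately show "m1 y \<in> visited \<and> E y (m1 y)"
      using m1_closed ac_not_visited unfolding add_edge_def by auto
  qed
  moreover have "perfect_matching (V - visited) E m2"
  proof (rule perfect_matching_restrict[OF m2])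
    fix y assume y: "y \<in> V - visited"
    then have "m2 y \<notin> visited"
      using m2_closed m2D by (metis DiffE)
    moreover have "add_edge E b d y (m2 y)"
      using m2D y by blast
    ultimately show "m2 y \<in> V - visited \<and> E y (m2 y)"
      using y m2D b_visited d_visited unfolding add_edge_def by auto
  qed simp
  ultimately have "has_perfect_matching (visited \<union> (V - visited)) E"
    by (intro has_perfect_matching_Un) (auto simp: has_perfect_matching_def)
  then show ?thesis
    using visited_subset by (simp add: Un_absorb1)
qed

lemma has_perfect_matching_if_first_new_even:
  assumes "even first_new"
  shows "has_perfect_matching V E"
proof -
  let ?t = first_new
  let ?v = "walk ?t"
  have "{?v, walk (Suc ?t)} = {a, c}"
    using new_edge_step_parity[OF new_edge_step_first_new] assms by simp
  moreover have "m1 ?v = walk (Suc ?t)"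
    using m1_walk[of ?t] assms by simp
  ultimately have v_ac: "?v \<in> {a, c}" and m1_v: "m1 ?v \<in> {a, c}"
    by (metis insertCI)+
  have v_visited: "?v \<in> visited"
    unfolding visited_def by simp
  have "m1 ?v \<notin> visited"
  proof
    assume "m1 ?v \<in> visited"
    then obtain j where "j \<le> ?t" "m1 ?v = walk j"
      unfolding visited_def by auto
    then have "j = ?t"
      using ac_walk_index m1_v by metis
    with \<open>m1 ?v = walk j\<close> show False
      using m1D[OF walk_in_V, of ?t] by simp
  qed
  have b_not_visited: "b \<notin> visited"
    using b_walk_index assms unfolding visited_def by blast
  have inside: "perfect_matching (visited - {?v}) E m1"
  proof (rule perfect_matching_restrict[OF m1])
    fix y assume y: "y \<in> visited - {?v}"
    then obtain i where i: "i < ?t" "y = walk i"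
      unfolding visited_def by (auto simp: le_less)
    obtain k where k: "k \<le> i" "{y, m1 y} = {walk k, walk (Suc k)}"
      using m1_edge_is_step i(2) by blast
    have "m1 y = walk (if even i then Suc i else i - 1)"
      using m1_walk i(2) by simp
    then have "m1 y \<in> visited"
      using i(1) unfolding visited_def by (auto split: if_splits)
    moreover have "m1 y \<noteq> ?v"
      using \<open>m1 ?v \<notin> visited\<close> y m1D[OF walk_in_V, of i] i(2) by auto
    moreover have "E y (m1 y)"
      using edge_if_doubleton_eq[OF sym k(2) edge_before_first_new] k(1) i(1) by simp
    ultimately show "m1 y \<in> visited - {?v} \<and> E y (m1 y)"
      by blast
  qed (use visited_subset in blast)
  have outside: "perfect_matching (V - visited - {b}) E m2"
  proof (rule perfect_matching_restrict[OF m2])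
    fix y assume y: "y \<in> V - visited - {b}"
    have "m2 y \<noteq> b"
      using y d_visited m2D[of y] m2_b by auto
    moreover have "m2 y \<notin> visited"
    proof
      assume "m2 y \<in> visited"
      then obtain i where i: "i \<le> ?t" "m2 y = walk i"
        unfolding visited_def by auto
      then have "y = m2 (walk i)"
        using y m2D[of y] by auto
      moreover have "i \<noteq> 0"
      proof
        assume "i = 0"
        then have "y = b"
          using \<open>y = m2 (walk i)\<close> m2_d by simp
        with y show False by blast
      qed
      moreover have "Suc i \<le> ?t" if "odd i"
        using that i(1) assms by (metis le_neq_implies_less Suc_leI)
      ultimately have "y \<in> visited"
        using m2_walk[of i] i(1) unfolding visited_def by (auto split: if_splits)
      with y show False by blast
    qed
    moreover have "add_edge E b d y (m2 y)"
      using m2D y by blast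
    ultimately show "m2 y \<in> V - visited - {b} \<and> E y (m2 y)"
      using y m2D[of y] d_visited unfolding add_edge_def by auto
  qed blast
  have "has_perfect_matching {?v, b} E"
  proof (rule has_perfect_matching_pair)
    show "E ?v b" "E b ?v"
      using v_ac ab bc sympD[OF sym ab] sympD[OF sym bc] by auto
    show "?v \<noteq> b"
      using v_visited b_not_visited by auto
  qed
  moreover have "has_perfect_matching (visited - {?v}) E" "has_perfect_matching (V - visited - {b}) E"
    using inside outside unfolding has_perfect_matching_def by blast+
  ultimately have "has_perfect_matching ((visited - {?v}) \<union> ({?v, b} \<union> (V - visited - {b}))) E"
    using v_visited b_not_visited by (intro has_perfect_matching_Un) auto
  moreover have "(visited - {?v}) \<union> ({?v, b} \<union> (V - visited - {b})) = V"
    using visited_subset v_visited in_V(2) by auto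
  ultimately show ?thesis
    by simp
qed

theorem has_perfect_matching: "has_perfect_matching V E"
  using has_perfect_matching_if_first_new_odd has_perfect_matching_if_first_new_even by blast

end

lemma has_perfect_matching_from_augmentations:
  assumes "graph V E" and "a \<in> V" "b \<in> V" "c \<in> V" "d \<in> V"
    and "E a b" and "E b c" and "\<not> E a c" and "\<not> E b d" and "b \<noteq> d"
    and "has_perfect_matching V (add_edge E a c)" and "has_perfect_matching V (add_edge E b d)"
  shows "has_perfect_matching V E"
proof -
  obtain m1 m2 where m1: "perfect_matching V (add_edge E a c) m1"
    and m2: "perfect_matching V (add_edge E b d) m2"
    using assms(11,12) unfolding has_perfect_matching_def by blast
  show ?thesis
  proof (cases "m1 a = c \<and> m2 b = d")
    case True
    then interpret matching_exchange V E a b c d m1 m2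
      using assms m1 m2 by unfold_locales auto
    show ?thesis
      by (rule has_perfect_matching)
  next
    case False
    then have "perfect_matching V E m1 \<or> perfect_matching V E m2"
      using perfect_matching_avoiding_added_edge[OF m1] perfect_matching_avoiding_added_edge[OF m2]
      by blast
    then show ?thesis
      unfolding has_perfect_matching_def by blast
  qed
qed

theorem has_perfect_matching_if_tutte_condition:
  assumes "graph V E" and "tutte_condition V E"
  shows "has_perfect_matching V E"
  using assms
proof (induction "card {(u, v). u \<in> V \<and> v \<in> V \<and> u \<noteq> v \<and> \<not> E u v}" arbitrary: E rule: less_induct)
  case less
  note graph = less.prems(1) and tutte = less.prems(2)
  have augmented: "has_perfect_matching V (add_edge E x y)"
    if xy: "x \<in> V" "y \<in> V" "x \<noteq> y" "\<not> E x y" for x y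
  proof (rule less.hyps)
    let ?N = "\<lambda>E. {(u, v). u \<in> V \<and> v \<in> V \<and> u \<noteq> v \<and> \<not> E u v}"
    have fin: "finite (?N E)"
      by (rule finite_subset[of _ "V \<times> V"]) (use graphD(1)[OF graph] in auto)
    have "?N (add_edge E x y) \<subseteq> ?N E - {(x, y)}"
      using xy unfolding add_edge_def by auto
    then have "card (?N (add_edge E x y)) \<le> card (?N E - {(x, y)})"
      using fin by (intro card_mono) auto
    also have "\<dots> < card (?N E)"
      using fin xy by (intro card_Diff1_less) auto
    finally show "card (?N (add_edge E x y)) < card (?N E)" .
    show "graph V (add_edge E x y)"
      using graph_add_edge[OF graph xy(1-3)] .
    show "tutte_condition V (add_edge E x y)"
      using tutte_condition_add_edge[OF graph tutte] .
  qed
  define S where "S = {v \<in> V. \<forall>w\<in>V. w \<noteq> v \<longrightarrow> E v w}"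
  show ?case
  proof (cases "\<forall>C \<in> components (V - S) E. \<forall>x\<in>C. \<forall>y\<in>C. x \<noteq> y \<longrightarrow> E x y")
    case True
    then show ?thesis
      using has_perfect_matching_if_components_cliques[OF graph tutte S_def] by blast
  next
    case False
    then obtain C x y where C: "C \<in> components (V - S) E" "x \<in> C" "y \<in> C" "x \<noteq> y" "\<not> E x y"
      by blast
    then obtain b c where bc: "b \<in> V - S" "c \<in> V - S" "E x b" "E b c" "\<not> E x c" "x \<noteq> c"
      using component_not_clique_obtains_path[OF graphD(2)[OF graph]] by blast
    obtain d where d: "d \<in> V" "d \<noteq> b" "\<not> E b d"
      using bc(1) unfolding S_def by blast
    have "x \<in> V"
      using C(1,2) components_subset by blast
    show ?thesis
    proof (rule has_perfect_matching_from_augmentations[OF graph \<open>x \<in> V\<close> _ _ d(1) bc(3-5) d(3)])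
      show "b \<in> V" "c \<in> V" "b \<noteq> d"
        using bc d by auto
      show "has_perfect_matching V (add_edge E x c)"
        using augmented \<open>x \<in> V\<close> bc by blast
      show "has_perfect_matching V (add_edge E b d)"
        using augmented bc d by blast
    qed
  qed
qed

lemma component_insert_if_not_adjacent:
  assumes "symp E" and C: "C \<in> components W E" and "\<And>y. y \<in> C \<Longrightarrow> \<not> E x y"
  shows "C \<in> components (insert x W) E"
proof -
  obtain v where v: "v \<in> C"
    using components_nonempty[OF C] by blast
  have CW: "C \<subseteq> insert x W"
    using components_subset[OF C] by blast
  show ?thesis
  proof (rule mem_componentsI[OF CW v])
    show "adj_closed (insert x W) E C"
      using components_adj_closed[OF C] assms(3) sympD[OF assms(1)] unfolding adj_closed_def by blast
    show "(induced_adj (insert x W) E)\<^sup>*\<^sup>* v u" if "u \<in> C" for u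
      by (rule reachable_mono[OF components_connected[OF assms(1) C v that] CW])
  qed
qed

lemma component_insert_merge:
  assumes "symp E" and "x \<notin> W"
  defines "A \<equiv> {C \<in> components W E. \<exists>y\<in>C. E x y}"
  shows "insert x (\<Union>A) \<in> components (insert x W) E"
proof (rule mem_componentsI)
  show "insert x (\<Union>A) \<subseteq> insert x W"
    unfolding A_def using components_subset by blast
  show "adj_closed (insert x W) E (insert x (\<Union>A))"
    unfolding adj_closed_def
  proof (intro ballI impI)
    fix z y assume z: "z \<in> insert x (\<Union>A)" and y: "y \<in> insert x W" and "E z y"
    show "y \<in> insert x (\<Union>A)"
    proof (cases "y = x \<or> z = x")
      case True
      moreover have "component_of W E y \<in> A" if "y \<in> W" "z = x"
        using that \<open>E z y\<close> component_of_self[OF that(1)] component_of_in_components[OF that(1)]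
        unfolding A_def by blast
      ultimately show ?thesis
        using y component_of_self by fastforce
    next
      case False
      then obtain C where "C \<in> A" "z \<in> C"
        using z by blast
      then show ?thesis
        using components_adj_closed[of C W E] y False \<open>E z y\<close> unfolding A_def adj_closed_def by blast
    qed
  qed
  show "(induced_adj (insert x W) E)\<^sup>*\<^sup>* x u" if u: "u \<in> insert x (\<Union>A)" for u
  proof (cases "u = x")
    case False
    then obtain C y where C: "C \<in> components W E" "y \<in> C" "E x y" "u \<in> C"
      using u unfolding A_def by blast
    then have "C \<subseteq> insert x W"
      using components_subset by blast
    then have "(induced_adj (insert x W) E)\<^sup>*\<^sup>* y u"
      using reachable_mono[OF components_connected[OF assms(1) C(1,2,4)]] by blast
    moreover have "induced_adj (insert x W) E x y"
      using C components_subset unfolding induced_adj_def by blast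
    ultimately show ?thesis
      by (meson converse_rtranclp_into_rtranclp)
  qed simp
qed simp

lemma card_odd_components_le_insert:
  assumes "symp E" and "finite W" and "x \<notin> W"
    and nbrs: "\<And>y. y \<in> W \<Longrightarrow> E x y \<Longrightarrow> y \<in> component_of W E y1 \<union> component_of W E y2"
  shows "card (odd_components W E) \<le> card (odd_components (insert x W) E) + 1"
proof -
  let ?A = "{C \<in> components W E. \<exists>y\<in>C. E x y}"
  let ?O = "odd_components W E" and ?O' = "odd_components (insert x W) E"
  have finO: "finite ?O"
    using finite_odd_components assms(2) by blast
  have finO': "finite ?O'"
    using finite_odd_components assms(2) by blast
  have "?A \<subseteq> {component_of W E y1, component_of W E y2}"
  proof
    fix C assume "C \<in> ?A"
    then obtain y where y: "C \<in> components W E" "y \<in> C" "E x y" by blast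
    then have "y \<in> W" and C: "C = component_of W E y"
      using components_subset[OF y(1)] components_eq_component_of[OF assms(1) y(1,2)] by blast+
    then have "y \<in> component_of W E y1 \<or> y \<in> component_of W E y2"
      using nbrs[of y] y(3) by blast
    then show "C \<in> {component_of W E y1, component_of W E y2}"
      using C component_of_eq[OF assms(1), of y] by blast
  qed
  note A_sub = this
  then have finA: "finite ?A"
    by (rule finite_subset) simp
  have "card {component_of W E y1, component_of W E y2} \<le> 2"
    by (simp add: card_insert_if)
  then have card_A: "card ?A \<le> 2"
    using card_mono[OF _ A_sub] by simp
  have kept: "?O - ?A \<subseteq> ?O'"
    using component_insert_if_not_adjacent[OF assms(1)] unfolding odd_components_def by blast
  have split: "card ?O = card (?O - ?A) + card (?O \<inter> ?A)"
    using card_Int_Diff[OF finO, of ?A] by simp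
  show ?thesis
  proof (cases "card (?O \<inter> ?A) \<le> 1")
    case True
    then show ?thesis
      using split card_mono[OF finO' kept] by linarith
  next
    case False
    then have "card (?O \<inter> ?A) = 2" and "?O \<inter> ?A = ?A"
      using card_A card_mono[OF finA, of "?O \<inter> ?A"] card_subset_eq[OF finA, of "?O \<inter> ?A"] by auto
    then obtain C1 C2 where C12: "?A = {C1, C2}" "C1 \<noteq> C2"
      unfolding card_2_iff by metis
    have C: "C1 \<in> ?O" "C2 \<in> ?O" "C1 \<in> components W E" "C2 \<in> components W E"
      using \<open>?O \<inter> ?A = ?A\<close> C12(1) by auto
    let ?K = "insert x (\<Union>?A)"
    have "C1 \<inter> C2 = {}"
      using components_disjoint[OF assms(1) C(3,4)] C12(2) by blast
    moreover have "x \<notin> C1 \<union> C2"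
      using C(3,4) components_subset assms(3) by blast
    moreover have "finite C1" "finite C2"
      using finite_component[OF assms(2)] C(3,4) by blast+
    ultimately have "card ?K = Suc (card C1 + card C2)"
      using C12(1) by (simp add: card_Un_disjoint)
    then have "?K \<in> ?O'"
      using component_insert_merge[OF assms(1,3)] C(1,2) unfolding odd_components_def by auto
    moreover have "?K \<notin> ?O - ?A"
      using assms(3) components_subset unfolding odd_components_def by blast
    ultimately have "card (insert ?K (?O - ?A)) \<le> card ?O'"
      using kept by (intro card_mono[OF finO']) auto
    then show ?thesis
      using split \<open>card (?O \<inter> ?A) = 2\<close> \<open>?K \<notin> ?O - ?A\<close> finO by simp
  qed
qed

lemma edges_between_component_split:
  assumes "finite V" "S \<subseteq> V" "T \<subseteq> V" "S \<inter> T = {}"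
    and Q: "Q \<in> components (V - (S \<union> T)) E" and F: "\<And>x y. F x y \<Longrightarrow> E x y"
  shows "edges_between F Q V = edges_between F Q Q + edges_between F Q S + edges_between F Q T"
proof -
  have QV: "Q \<subseteq> V - (S \<union> T)"
    using components_subset[OF Q] .
  have fin: "finite Q" "finite S" "finite T"
    using assms(1-3) QV finite_subset by blast+
  have "{b \<in> V. F a b} = {b \<in> Q \<union> S \<union> T. F a b}" if "a \<in> Q" for a
    using that QV assms(2,3) components_adj_closed[OF Q] F unfolding adj_closed_def by blast
  then have "edges_between F Q V = edges_between F Q (Q \<union> S \<union> T)"
    using fin assms(1) by (simp add: edges_between_eq_sum)
  also have "\<dots> = edges_between F Q (Q \<union> S) + edges_between F Q T"
    using fin QV assms(4) by (intro edges_between_Un_right) auto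
  also have "edges_between F Q (Q \<union> S) = edges_between F Q Q + edges_between F Q S"
    using fin QV by (intro edges_between_Un_right) auto
  finally show ?thesis .
qed

datatype 'a gadget_vertex = Port 'a nat | Half 'a 'a

definition gadget_verts :: "'a set \<Rightarrow> ('a \<Rightarrow> 'a \<Rightarrow> bool) \<Rightarrow> nat \<Rightarrow> 'a gadget_vertex set" where
  "gadget_verts V E k = {Port v i | v i. v \<in> V \<and> i < k} \<union> {Half v w | v w. E v w}"

fun gadget_adj :: "('a \<Rightarrow> 'a \<Rightarrow> bool) \<Rightarrow> nat \<Rightarrow> 'a gadget_vertex \<Rightarrow> 'a gadget_vertex \<Rightarrow> bool" where
  "gadget_adj E k (Port v i) (Half u w) \<longleftrightarrow> u = v \<and> i < k \<and> E v w"
| "gadget_adj E k (Half u w) (Port v i) \<longleftrightarrow> u = v \<and> i < k \<and> E v w"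
| "gadget_adj E k (Half u w) (Half u' w') \<longleftrightarrow> u' = w \<and> w' = u \<and> E u w"
| "gadget_adj E k (Port v i) (Port u j) \<longleftrightarrow> False"

fun far_end :: "'a gadget_vertex \<Rightarrow> 'a" where
  "far_end (Half v w) = w"
| "far_end (Port v i) = v"

lemma Port_in_gadget_verts [simp]: "Port v i \<in> gadget_verts V E k \<longleftrightarrow> v \<in> V \<and> i < k"
  unfolding gadget_verts_def by auto

lemma Half_in_gadget_verts [simp]: "Half v w \<in> gadget_verts V E k \<longleftrightarrow> E v w"
  unfolding gadget_verts_def by auto

lemma symp_gadget_adj: "symp E \<Longrightarrow> symp (gadget_adj E k)"
proof (rule sympI)
  fix x y assume "symp E" and "gadget_adj E k x y"
  then show "gadget_adj E k y x"
    by (cases x; cases y) (auto dest: sympD)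
qed

lemma graph_gadget:
  assumes "graph V E"
  shows "graph (gadget_verts V E k) (gadget_adj E k)"
proof -
  note fin = graphD(1)[OF assms] and sym = graphD(2)[OF assms]
    and irrefl = graphD(3)[OF assms] and in_V = graphD(4)[OF assms]
  have "gadget_verts V E k \<subseteq> (\<lambda>(v, i). Port v i) ` (V \<times> {..<k}) \<union> (\<lambda>(v, w). Half v w) ` (V \<times> V)"
    unfolding gadget_verts_def using in_V by auto
  then have "finite (gadget_verts V E k)"
    by (rule finite_subset) (use fin in auto)
  moreover have "x \<in> gadget_verts V E k \<and> y \<in> gadget_verts V E k" if "gadget_adj E k x y" for x y
    using that in_V sympD[OF sym] by (cases x; cases y) auto
  moreover have "\<not> gadget_adj E k x x" for x
    using irrefl by (cases x) (auto simp: irreflp_def)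
  ultimately show ?thesis
    using symp_gadget_adj[OF sym] unfolding graph_def symp_def by blast
qed

lemma has_k_factor_if_gadget_perfect_matching:
  assumes "graph V E" and m: "perfect_matching (gadget_verts V E k) (gadget_adj E k) m"
  shows "has_k_factor V E k"
proof -
  note fin = graphD(1)[OF assms(1)] and sym = graphD(2)[OF assms(1)]
    and irrefl = graphD(3)[OF assms(1)] and in_V = graphD(4)[OF assms(1)]
  have mD: "m y \<in> gadget_verts V E k \<and> m y \<noteq> y \<and> m (m y) = y \<and> gadget_adj E k y (m y)"
    if "y \<in> gadget_verts V E k" for y
    using perfect_matchingD[OF m that] .
  define F where "F v w \<longleftrightarrow> E v w \<and> m (Half v w) \<noteq> Half w v" for v w
  have F_sym: "F w v" if "F v w" for v w
  proof -
    have E: "E v w" "E w v"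
      using that sympD[OF sym] unfolding F_def by auto
    have "m (Half w v) \<noteq> Half v w"
      using that mD[of "Half w v"] E(2) unfolding F_def by auto
    then show ?thesis
      using E unfolding F_def by auto
  qed
  have "graph V F"
    unfolding graph_def using fin in_V irrefl F_sym unfolding F_def irreflp_def by blast
  moreover have "degree V F v = k" if v: "v \<in> V" for v
  proof -
    have port_match: "\<exists>w. m (Port v i) = Half v w \<and> E v w" if "i < k" for i
      using mD[of "Port v i"] v that by (cases "m (Port v i)") auto
    have "bij_betw (\<lambda>i. far_end (m (Port v i))) {..<k} {u \<in> V. F v u}"
    proof (rule bij_betwI')
      fix i j assume ij: "i \<in> {..<k}" "j \<in> {..<k}"
      obtain w1 w2 where "m (Port v i) = Half v w1" "m (Port v j) = Half v w2"
        using port_match ij by (meson lessThan_iff)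
      moreover have "m (m (Port v i)) = Port v i" "m (m (Port v j)) = Port v j"
        using mD v ij by auto
      ultimately show "far_end (m (Port v i)) = far_end (m (Port v j)) \<longleftrightarrow> i = j"
        by auto
    next
      fix i assume "i \<in> {..<k}"
      then obtain w where w: "m (Port v i) = Half v w" "E v w"
        using port_match by blast
      then have "m (Half v w) = Port v i"
        using mD[of "Port v i"] v \<open>i \<in> {..<k}\<close> by auto
      then show "far_end (m (Port v i)) \<in> {u \<in> V. F v u}"
        using w in_V unfolding F_def by auto
    next
      fix u assume "u \<in> {u \<in> V. F v u}"
      then have E: "E v u" and ne: "m (Half v u) \<noteq> Half u v"
        unfolding F_def by auto
      then obtain i where i: "m (Half v u) = Port v i" "i < k"
        using mD[of "Half v u"] by (cases "m (Half v u)") auto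
      then have "m (Port v i) = Half v u"
        using mD[of "Half v u"] E by auto
      then show "\<exists>i\<in>{..<k}. u = far_end (m (Port v i))"
        using i by force
    qed
    then show ?thesis
      unfolding degree_def by (simp add: bij_betw_same_card[symmetric])
  qed
  moreover have "\<forall>u v. F u v \<longrightarrow> E u v"
    unfolding F_def by blast
  ultimately show ?thesis
    unfolding has_k_factor_def by blast
qed

locale gadget_cut =
  fixes V :: "'a set" and E :: "'a \<Rightarrow> 'a \<Rightarrow> bool" and k :: nat and S T :: "'a set"
  assumes graph: "graph V E" and k_pos: "1 \<le> k" and no_isolated: "\<And>v. v \<in> V \<Longrightarrow> \<exists>w. E v w"
    and S_sub: "S \<subseteq> V" and T_sub: "T \<subseteq> V" and ST_disjoint: "S \<inter> T = {}"
begin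

lemma sym: "symp E"
  using graphD(2)[OF graph] .

lemma in_V: "E u v \<Longrightarrow> u \<in> V \<and> v \<in> V"
  using graphD(4)[OF graph] .

definition cut :: "'a gadget_vertex set" where
  "cut = {Port v i | v i. v \<in> S \<and> i < k} \<union> {Half v w | v w. v \<in> T \<and> E v w}"

definition rest :: "'a gadget_vertex set" where
  "rest = gadget_verts V E k - cut"

lemma Port_in_rest: "Port v i \<in> rest \<longleftrightarrow> v \<in> V \<and> i < k \<and> v \<notin> S"
  unfolding rest_def cut_def by auto

lemma Half_in_rest: "Half v w \<in> rest \<longleftrightarrow> E v w \<and> v \<notin> T"
  unfolding rest_def cut_def by auto

text \<open>The component of the gadget minus the cut lying over a component \<open>Q\<close> of
  \<open>V - (S \<union> T)\<close>: the ports and half-edges at \<open>Q\<close>, and the far halves of the edges from \<open>Q\<close> to \<open>S\<close>.\<close>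

definition lift :: "'a set \<Rightarrow> 'a gadget_vertex set" where
  "lift Q = {Port v i | v i. v \<in> Q \<and> i < k} \<union> {Half v w | v w. v \<in> Q \<and> E v w}
      \<union> {Half w v | v w. v \<in> Q \<and> w \<in> S \<and> E v w}"

lemma lift_subset_rest:
  assumes "Q \<subseteq> V - (S \<union> T)"
  shows "lift Q \<subseteq> rest"
  using assms ST_disjoint sympD[OF sym] unfolding lift_def
  by (auto simp: Port_in_rest Half_in_rest)

lemma adj_closed_lift:
  assumes Q: "Q \<in> components (V - (S \<union> T)) E"
  shows "adj_closed rest (gadget_adj E k) (lift Q)"
  unfolding adj_closed_def
proof (intro ballI impI)
  fix z y assume z: "z \<in> lift Q" and y: "y \<in> rest" and zy: "gadget_adj E k z y"
  have Q_closed: "adj_closed (V - (S \<union> T)) E Q"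
    using components_adj_closed[OF Q] .
  have QR: "Q \<subseteq> V - (S \<union> T)"
    using components_subset[OF Q] .
  show "y \<in> lift Q"
  proof (cases z)
    case (Port v i)
    then show ?thesis
      using z zy unfolding lift_def by (cases y) auto
  next
    case (Half v w)
    have at_Q: "v \<in> Q \<or> (w \<in> Q \<and> v \<in> S)"
      using z Half unfolding lift_def by auto
    show ?thesis
    proof (cases y)
      case (Port u j)
      then have "u = v" "j < k" "E v w" "v \<notin> S"
        using zy y Half by (auto simp: Port_in_rest)
      then show ?thesis
        using at_Q Port unfolding lift_def by auto
    next
      case (Half u u')
      then have uu: "u = w" "u' = v" "E v w" "w \<notin> T"
        using zy y \<open>z = Half v w\<close> by (auto simp: Half_in_rest)
      have "w \<in> S \<or> w \<in> Q" if "v \<in> Q"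
        using that uu in_V Q_closed unfolding adj_closed_def by blast
      then show ?thesis
        using at_Q uu Half sympD[OF sym] unfolding lift_def by auto
    qed
  qed
qed

lemma lift_connected:
  assumes Q: "Q \<in> components (V - (S \<union> T)) E" and "v0 \<in> Q" and u: "u \<in> lift Q"
  shows "(induced_adj rest (gadget_adj E k))\<^sup>*\<^sup>* (Port v0 0) u"
proof -
  let ?r = "induced_adj rest (gadget_adj E k)"
  have QR: "Q \<subseteq> V - (S \<union> T)"
    using components_subset[OF Q] .
  have port_half: "?r (Port v i) (Half v w)" "?r (Half v w) (Port v i)"
    if "v \<in> Q" "i < k" "E v w" for v w i
    using that QR by (auto simp: induced_adj_def Port_in_rest Half_in_rest)
  have half_half: "?r (Half v w) (Half w v)" if "v \<in> Q" "E v w" "w \<notin> T" for v w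
    using that QR sympD[OF sym] by (auto simp: induced_adj_def Half_in_rest)
  have ports: "?r\<^sup>*\<^sup>* (Port v0 0) (Port v 0)" if "v \<in> Q" for v
  proof -
    have "(induced_adj Q E)\<^sup>*\<^sup>* v0 v"
      using components_connected[OF sym Q assms(2) that] .
    then show ?thesis
    proof (induction rule: rtranclp_induct)
      case (step x y)
      then have xy: "x \<in> Q" "y \<in> Q" "E x y"
        unfolding induced_adj_def by auto
      then have "?r (Port x 0) (Half x y)" "?r (Half x y) (Half y x)" "?r (Half y x) (Port y 0)"
        using port_half half_half k_pos QR sympD[OF sym] by auto
      with step.IH show ?case
        by (meson rtranclp.rtrancl_into_rtrancl)
    qed simp
  qed
  show ?thesis
  proof (cases u)
    case (Port v i)
    then have "v \<in> Q" "i < k"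
      using u unfolding lift_def by auto
    moreover obtain w where "E v w"
      using no_isolated \<open>v \<in> Q\<close> QR by blast
    ultimately have "?r (Port v 0) (Half v w)" "?r (Half v w) (Port v i)"
      using port_half k_pos by auto
    then show ?thesis
      using ports[OF \<open>v \<in> Q\<close>] Port by (meson rtranclp.rtrancl_into_rtrancl)
  next
    case (Half v w)
    then consider "v \<in> Q" "E v w" | "w \<in> Q" "v \<in> S" "E w v"
      using u unfolding lift_def by auto
    then show ?thesis
    proof cases
      case 1
      then have "?r (Port v 0) (Half v w)"
        using port_half k_pos by auto
      then show ?thesis
        using ports[OF \<open>v \<in> Q\<close>] Half by (meson rtranclp.rtrancl_into_rtrancl)
    next
      case 2
      moreover have "v \<notin> T"
        using 2 ST_disjoint by blast
      ultimately have "?r (Port w 0) (Half w v)" "?r (Half w v) (Half v w)"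
        using port_half[of w 0 v] half_half[of w v] k_pos by auto
      then show ?thesis
        using ports[OF \<open>w \<in> Q\<close>] Half by (meson rtranclp.rtrancl_into_rtrancl)
    qed
  qed
qed

lemma lift_in_components:
  assumes Q: "Q \<in> components (V - (S \<union> T)) E"
  shows "lift Q \<in> components rest (gadget_adj E k)"
proof -
  obtain v0 where "v0 \<in> Q"
    using components_nonempty[OF Q] by blast
  then have "Port v0 0 \<in> lift Q"
    using k_pos unfolding lift_def by auto
  then show ?thesis
    using lift_subset_rest[OF components_subset[OF Q]] adj_closed_lift[OF Q]
      lift_connected[OF Q \<open>v0 \<in> Q\<close>] by (intro mem_componentsI)
qed

lemma card_lift:
  assumes Q: "Q \<in> components (V - (S \<union> T)) E"
  shows "card (lift Q) = k * card Q + edges_between E Q V + edges_between E Q S"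
proof -
  have QR: "Q \<subseteq> V - (S \<union> T)"
    using components_subset[OF Q] .
  have fin: "finite V" "finite Q" "finite S"
    using graphD(1)[OF graph] QR S_sub finite_subset by blast+
  define P1 where "P1 = (\<lambda>(v, i). Port v i) ` (Q \<times> {..<k})"
  define P2 where "P2 = (\<lambda>(v, w). Half v w) ` {(v, w). v \<in> Q \<and> w \<in> V \<and> E v w}"
  define P3 where "P3 = (\<lambda>(v, w). Half w v) ` {(v, w). v \<in> Q \<and> w \<in> S \<and> E v w}"
  have "lift Q = P1 \<union> P2 \<union> P3"
    unfolding lift_def P1_def P2_def P3_def using in_V by auto
  moreover have "card P1 = k * card Q"
    unfolding P1_def by (subst card_image) (auto simp: inj_on_def card_cartesian_product)
  moreover have "card P2 = edges_between E Q V"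
    unfolding P2_def edges_between_def by (subst card_image) (auto simp: inj_on_def)
  moreover have "card P3 = edges_between E Q S"
    unfolding P3_def edges_between_def by (subst card_image) (auto simp: inj_on_def)
  moreover have "finite P1" "finite P2" "finite P3"
    unfolding P1_def P2_def P3_def using fin finite_edges_between_set by auto
  moreover have "P1 \<inter> P2 = {}" "(P1 \<union> P2) \<inter> P3 = {}"
    unfolding P1_def P2_def P3_def using QR by auto
  ultimately show ?thesis
    by (simp add: card_Un_disjoint)
qed

lemma odd_card_lift_iff:
  assumes Q: "Q \<in> components (V - (S \<union> T)) E"
  shows "odd (card (lift Q)) \<longleftrightarrow> odd (k * card Q + edges_between E Q T)"
proof -
  have "finite Q"
    using finite_component[OF _ Q] graphD(1)[OF graph] by blast
  then have "even (edges_between E Q Q)"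
    using even_edges_between_self sym graphD(3)[OF graph] by blast
  moreover have "edges_between E Q V = edges_between E Q Q + edges_between E Q S + edges_between E Q T"
    using edges_between_component_split[OF graphD(1)[OF graph] S_sub T_sub ST_disjoint Q] by blast
  ultimately show ?thesis
    using card_lift[OF Q] by auto
qed

lemma odd_component_of_rest_cases:
  assumes K: "K \<in> odd_components rest (gadget_adj E k)"
  shows "(\<exists>v i. v \<in> T \<and> i < k \<and> K = {Port v i})
    \<or> (\<exists>v w. v \<in> S \<and> w \<in> T \<and> E v w \<and> K = {Half v w})
    \<or> (\<exists>Q \<in> odd_comps V E k S T. K = lift Q)"
proof -
  have K_comp: "K \<in> components rest (gadget_adj E k)" and K_odd: "odd (card K)"
    using K unfolding odd_components_def by auto
  note gsym = symp_gadget_adj[OF sym]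
  obtain z where z: "z \<in> K"
    using components_nonempty[OF K_comp] by blast
  have z_rest: "z \<in> rest"
    using z components_subset[OF K_comp] by blast
  have lifted: "\<exists>Q \<in> odd_comps V E k S T. K = lift Q"
    if v: "v \<in> V - (S \<union> T)" and "z \<in> lift (component_of (V - (S \<union> T)) E v)" for v
  proof -
    let ?Q = "component_of (V - (S \<union> T)) E v"
    have Q: "?Q \<in> components (V - (S \<union> T)) E"
      using component_of_in_components[OF v] .
    have "K = lift ?Q"
      using components_disjoint[OF gsym K_comp lift_in_components[OF Q]] z that(2) by blast
    moreover have "?Q \<in> odd_comps V E k S T"
      using Q K_odd odd_card_lift_iff[OF Q] \<open>K = lift ?Q\<close> unfolding odd_comps_def by simp
    ultimately show ?thesis
      by blast
  qed
  have singleton: "K = {z}" if "adj_closed rest (gadget_adj E k) {z}"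
    using components_disjoint[OF gsym K_comp mem_componentsI[of "{z}" rest z, OF _ _ that]] z z_rest
    by auto
  show ?thesis
  proof (cases z)
    case (Port v i)
    then have v: "v \<in> V" "i < k" "v \<notin> S"
      using z_rest by (auto simp: Port_in_rest)
    show ?thesis
    proof (cases "v \<in> T")
      case True
      have "adj_closed rest (gadget_adj E k) {z}"
        unfolding adj_closed_def using Port True by (auto elim!: gadget_adj.elims simp: Half_in_rest)
      then show ?thesis
        using singleton True v Port by blast
    next
      case False
      then have "v \<in> V - (S \<union> T)"
        using v by blast
      moreover have "z \<in> lift (component_of (V - (S \<union> T)) E v)"
        unfolding lift_def using Port v component_of_self[OF \<open>v \<in> V - (S \<union> T)\<close>] by auto
      ultimately show ?thesis
        using lifted by blast
    qed
  next
    case (Half v w)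
    then have vw: "E v w" "v \<notin> T" "v \<in> V" "w \<in> V"
      using z_rest in_V by (auto simp: Half_in_rest)
    consider "v \<notin> S" | "v \<in> S" "w \<in> V - (S \<union> T)" | "v \<in> S" "w \<in> T" | "v \<in> S" "w \<in> S"
      using vw by blast
    then show ?thesis
    proof cases
      case 1
      then have "v \<in> V - (S \<union> T)" "z \<in> lift (component_of (V - (S \<union> T)) E v)"
        unfolding lift_def using Half vw component_of_self[of v "V - (S \<union> T)" E] by auto
      then show ?thesis
        using lifted by blast
    next
      case 2
      then have "z \<in> lift (component_of (V - (S \<union> T)) E w)"
        unfolding lift_def using Half vw sympD[OF sym] component_of_self[OF 2(2)] by auto
      then show ?thesis
        using lifted 2(2) by blast
    next
      case 3
      have "adj_closed rest (gadget_adj E k) {z}"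
        unfolding adj_closed_def using Half 3 by (auto elim!: gadget_adj.elims simp: Port_in_rest Half_in_rest)
      then show ?thesis
        using singleton 3 vw Half by blast
    next
      case 4
      let ?K = "{Half v w, Half w v}"
      have "?K \<in> components rest (gadget_adj E k)"
      proof (rule mem_componentsI)
        show "?K \<subseteq> rest"
          using vw 4 ST_disjoint sympD[OF sym] by (auto simp: Half_in_rest)
        show "adj_closed rest (gadget_adj E k) ?K"
          unfolding adj_closed_def using 4 by (auto elim!: gadget_adj.elims simp: Port_in_rest)
        have "induced_adj rest (gadget_adj E k) (Half v w) (Half w v)"
          using vw 4 ST_disjoint sympD[OF sym] by (auto simp: induced_adj_def Half_in_rest)
        then show "(induced_adj rest (gadget_adj E k))\<^sup>*\<^sup>* (Half v w) u" if "u \<in> ?K" for u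
          using that by auto
      qed simp
      then have "K = ?K"
        using components_disjoint[OF gsym K_comp] z Half by blast
      moreover have "v \<noteq> w"
        using vw(1) graphD(3)[OF graph] by (auto simp: irreflp_def)
      ultimately show ?thesis
        using K_odd by simp
    qed
  qed
qed

lemma card_odd_components_rest:
  "card (odd_components rest (gadget_adj E k)) \<le> k * card T + edges_between E S T + q V E k S T"
proof -
  let ?A1 = "(\<lambda>(v, i). {Port v i}) ` (T \<times> {..<k})"
  let ?A2 = "(\<lambda>(v, w). {Half v w}) ` {(v, w). v \<in> S \<and> w \<in> T \<and> E v w}"
  let ?A3 = "lift ` odd_comps V E k S T"
  have fin: "finite S" "finite T"
    using S_sub T_sub graphD(1)[OF graph] finite_subset by blast+
  have "finite (components (V - (S \<union> T)) E)"
    using graphD(1)[OF graph] finite_components by blast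
  then have "finite (odd_comps V E k S T)"
    unfolding odd_comps_def by simp
  note fin = fin this
  have "odd_components rest (gadget_adj E k) \<subseteq> ?A1 \<union> ?A2 \<union> ?A3"
  proof
    fix K assume "K \<in> odd_components rest (gadget_adj E k)"
    then show "K \<in> ?A1 \<union> ?A2 \<union> ?A3"
      using odd_component_of_rest_cases by fast
  qed
  moreover have "finite (?A1 \<union> ?A2 \<union> ?A3)"
    using fin finite_edges_between_set by auto
  ultimately have "card (odd_components rest (gadget_adj E k)) \<le> card (?A1 \<union> ?A2 \<union> ?A3)"
    by (rule card_mono[rotated])
  also have "\<dots> \<le> card ?A1 + card ?A2 + card ?A3"
    by (meson card_Un_le add_le_mono le_refl order_trans)
  also have "\<dots> \<le> k * card T + edges_between E S T + q V E k S T"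
  proof -
    have "card ?A1 \<le> k * card T"
      using card_image_le[of "T \<times> {..<k}"] fin by (simp add: card_cartesian_product mult.commute)
    moreover have "card ?A2 \<le> edges_between E S T"
      unfolding edges_between_def using fin finite_edges_between_set by (intro card_image_le) auto
    moreover have "card ?A3 \<le> q V E k S T"
      unfolding q_def using fin by (intro card_image_le) auto
    ultimately show ?thesis
      by linarith
  qed
  finally show ?thesis .
qed

lemma card_cut: "card cut = k * card S + (\<Sum>v\<in>T. degree V E v)"
proof -
  have fin: "finite V" "finite S" "finite T"
    using graphD(1)[OF graph] S_sub T_sub finite_subset by blast+
  have "cut = (\<lambda>(v, i). Port v i) ` (S \<times> {..<k}) \<union> (\<lambda>(v, w). Half v w) ` {(v, w). v \<in> T \<and> w \<in> V \<and> E v w}"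
    unfolding cut_def using in_V by auto
  moreover have "card ((\<lambda>(v, i). Port v i) ` (S \<times> {..<k})) = k * card S"
    by (subst card_image) (auto simp: inj_on_def card_cartesian_product)
  moreover have "card ((\<lambda>(v, w). Half v w) ` {(v, w). v \<in> T \<and> w \<in> V \<and> E v w}) = edges_between E T V"
    unfolding edges_between_def by (subst card_image) (auto simp: inj_on_def)
  moreover have "edges_between E T V = (\<Sum>v\<in>T. degree V E v)"
    using edges_between_eq_sum_degree fin(1) T_sub by blast
  moreover have "finite {(v, w). v \<in> T \<and> w \<in> V \<and> E v w}"
    using finite_edges_between_set[OF fin(3,1)] .
  moreover have "(\<lambda>(v, i). Port v i) ` (S \<times> {..<k}) \<inter> (\<lambda>(v, w). Half v w) ` {(v, w). v \<in> T \<and> w \<in> V \<and> E v w} = {}"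
    by auto
  ultimately show ?thesis
    using fin(2) by (simp add: card_Un_disjoint)
qed

end

definition factor_condition :: "'a set \<Rightarrow> ('a \<Rightarrow> 'a \<Rightarrow> bool) \<Rightarrow> nat \<Rightarrow> 'a set \<Rightarrow> 'a set \<Rightarrow> bool" where
  "factor_condition V E k S T \<longleftrightarrow>
     q V E k S T + edges_between E S T \<le> k * card S + (\<Sum>v \<in> T \<inter> high V E k. degree V E v - k)"

lemma sum_high_excess:
  assumes "finite V" and "T \<subseteq> V" and "\<And>v. v \<in> V \<Longrightarrow> k \<le> degree V E v"
  shows "(\<Sum>v \<in> T \<inter> high V E k. degree V E v - k) + k * card T = (\<Sum>v\<in>T. degree V E v)"
proof -
  have fin: "finite T"
    using assms(1,2) finite_subset by blast
  have "(\<Sum>v \<in> T \<inter> high V E k. degree V E v - k) = (\<Sum>v\<in>T. degree V E v - k)"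
    using assms(2) fin by (intro sum.mono_neutral_left) (auto simp: high_def)
  also have "\<dots> + k * card T = (\<Sum>v\<in>T. degree V E v - k + k)"
    by (simp add: sum.distrib mult.commute)
  also have "\<dots> = (\<Sum>v\<in>T. degree V E v)"
    using assms(2,3) by (intro sum.cong) auto
  finally show ?thesis .
qed

lemma (in gadget_cut) card_odd_components_rest_le_card_cut:
  assumes "factor_condition V E k S T" and "\<And>v. v \<in> V \<Longrightarrow> k \<le> degree V E v"
  shows "card (odd_components rest (gadget_adj E k)) \<le> card cut"
  using card_odd_components_rest assms(1) card_cut
    sum_high_excess[OF graphD(1)[OF graph] T_sub assms(2)]
  unfolding factor_condition_def by linarith

lemma card_odd_components_Diff_le_if_remove:
  assumes "graph V E" and "X \<subseteq> V" and "x \<in> X"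
    and IH: "card (odd_components (V - (X - {x})) E) \<le> card (X - {x})"
    and nbrs: "\<And>y. y \<in> V - X \<Longrightarrow> E x y \<Longrightarrow> y \<in> component_of (V - X) E y1 \<union> component_of (V - X) E y2"
  shows "card (odd_components (V - X) E) \<le> card X"
proof -
  have "finite X"
    using assms(2) graphD(1)[OF assms(1)] finite_subset by blast
  have "V - (X - {x}) = insert x (V - X)"
    using assms(2,3) by blast
  moreover have "card (odd_components (V - X) E) \<le> card (odd_components (insert x (V - X)) E) + 1"
    using graphD(1,2)[OF assms(1)] nbrs assms(3) by (intro card_odd_components_le_insert) auto
  ultimately have "card (odd_components (V - X) E) \<le> card (odd_components (V - (X - {x})) E) + 1"
    by simp
  also have "\<dots> \<le> card X"
    using IH card_Suc_Diff1[OF \<open>finite X\<close> assms(3)] by linarith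
  finally show ?thesis .
qed

lemma gadget_subset_normal_form:
  assumes X: "X \<subseteq> gadget_verts V E k"
    and ports: "\<And>v i. Port v i \<in> X \<Longrightarrow> i < k \<Longrightarrow> Port v 0 \<in> X"
    and ports': "\<And>v i. Port v 0 \<in> X \<Longrightarrow> i < k \<Longrightarrow> Port v i \<in> X"
    and halves: "\<And>v w. Half v w \<in> X \<Longrightarrow> Port v 0 \<notin> X"
    and halves': "\<And>v w w'. Half v w \<in> X \<Longrightarrow> E v w' \<Longrightarrow> Half v w' \<in> X"
    and in_V: "\<And>u v. E u v \<Longrightarrow> u \<in> V \<and> v \<in> V"
  defines "S \<equiv> {v \<in> V. Port v 0 \<in> X}"
    and "T \<equiv> {v \<in> V. Port v 0 \<notin> X \<and> (\<forall>w. E v w \<longrightarrow> Half v w \<in> X)}"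
  shows "X = {Port v i | v i. v \<in> S \<and> i < k} \<union> {Half v w | v w. v \<in> T \<and> E v w}"
proof (intro equalityI subsetI)
  fix z assume z: "z \<in> X"
  show "z \<in> {Port v i | v i. v \<in> S \<and> i < k} \<union> {Half v w | v w. v \<in> T \<and> E v w}"
  proof (cases z)
    case (Port v i)
    then show ?thesis
      using z X ports unfolding S_def by auto
  next
    case (Half v w)
    then show ?thesis
      using z X halves halves' in_V unfolding T_def by fastforce
  qed
qed (use ports' in \<open>auto simp: S_def T_def\<close>)

lemma tutte_condition_gadget:
  assumes graph: "graph V E" and k_pos: "1 \<le> k" and min_deg: "\<And>v. v \<in> V \<Longrightarrow> k \<le> degree V E v"
    and cond: "\<And>S T. S \<subseteq> V \<Longrightarrow> T \<subseteq> V \<Longrightarrow> S \<inter> T = {} \<Longrightarrow> factor_condition V E k S T"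
  shows "tutte_condition (gadget_verts V E k) (gadget_adj E k)"
proof -
  let ?GV = "gadget_verts V E k" and ?GE = "gadget_adj E k"
  have ggraph: "graph ?GV ?GE"
    using graph_gadget[OF graph] .
  note in_V = graphD(4)[OF graph]
  have no_isolated: "\<exists>w. E v w" if "v \<in> V" for v
  proof -
    have "card {u \<in> V. E v u} \<noteq> 0"
      using min_deg[OF that] k_pos unfolding degree_def by linarith
    then show ?thesis
      by (metis (no_types, lifting) card.empty empty_Collect_eq)
  qed
  have "card (odd_components (?GV - X) ?GE) \<le> card X" if "X \<subseteq> ?GV" for X
    using that
  proof (induction "card X" arbitrary: X rule: less_induct)
    case less
    note X = less.prems
    have remove: "card (odd_components (?GV - X) ?GE) \<le> card X"
      if x: "x \<in> X" and nbrs: "\<And>y. y \<in> ?GV - X \<Longrightarrow> ?GE x y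
          \<Longrightarrow> y \<in> component_of (?GV - X) ?GE y1 \<union> component_of (?GV - X) ?GE y2" for x y1 y2
    proof (rule card_odd_components_Diff_le_if_remove[OF ggraph X x _ nbrs])
      have "finite X"
        using X graphD(1)[OF ggraph] finite_subset by blast
      then have "card (X - {x}) < card X"
        using x by (rule card_Diff1_less)
      then show "card (odd_components (?GV - (X - {x})) ?GE) \<le> card (X - {x})"
        using less.hyps X by blast
    qed
    have reach: "y \<in> component_of (?GV - X) ?GE y'" if "induced_adj (?GV - X) ?GE y' y" for y y'
      using that unfolding component_of_def induced_adj_def by auto
    show ?case
    proof (cases "\<exists>v i j. i < k \<and> j < k \<and> Port v i \<in> X \<and> Port v j \<notin> X")
      case True
      then obtain v i j where vij: "i < k" "j < k" "Port v i \<in> X" "Port v j \<notin> X"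
        by blast
      show ?thesis
      proof (rule remove[OF vij(3), of "Port v j" "Port v j"])
        fix y assume y: "y \<in> ?GV - X" "?GE (Port v i) y"
        then have "induced_adj (?GV - X) ?GE (Port v j) y"
          using vij X by (cases y) (auto simp: induced_adj_def)
        then show "y \<in> component_of (?GV - X) ?GE (Port v j) \<union> component_of (?GV - X) ?GE (Port v j)"
          using reach by blast
      qed
    next
      case no_port: False
      show ?thesis
      proof (cases "\<exists>v w. Half v w \<in> X \<and> Port v 0 \<in> X")
        case True
        then obtain v w where vw: "Half v w \<in> X" "Port v 0 \<in> X"
          by blast
        show ?thesis
        proof (rule remove[OF vw(1), of "Half w v" "Half w v"])
          fix y assume y: "y \<in> ?GV - X" "?GE (Half v w) y"
          then have "y = Half w v"
            using no_port vw(2) k_pos by (cases y) auto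
          then show "y \<in> component_of (?GV - X) ?GE (Half w v) \<union> component_of (?GV - X) ?GE (Half w v)"
            using component_of_self[OF y(1)] by simp
        qed
      next
        case no_half_port: False
        show ?thesis
        proof (cases "\<exists>v w w'. Half v w \<in> X \<and> E v w' \<and> Half v w' \<notin> X")
          case True
          then obtain v w w' where vw: "Half v w \<in> X" "E v w'" "Half v w' \<notin> X"
            by blast
          have no_ports: "Port v i \<notin> X" for i
          proof
            assume "Port v i \<in> X"
            then have "i < k"
              using X by auto
            with \<open>Port v i \<in> X\<close> have "Port v 0 \<in> X"
              using no_port k_pos by force
            then show False
              using no_half_port vw(1) by blast
          qed
          show ?thesis
          proof (rule remove[OF vw(1), of "Half v w'" "Half w v"])
            fix y assume y: "y \<in> ?GV - X" "?GE (Half v w) y"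
            show "y \<in> component_of (?GV - X) ?GE (Half v w') \<union> component_of (?GV - X) ?GE (Half w v)"
            proof (cases y)
              case (Port u i)
              then have "induced_adj (?GV - X) ?GE (Half v w') y"
                using y vw(2,3) by (auto simp: induced_adj_def)
              then show ?thesis
                using reach by blast
            next
              case (Half u u')
              then have "y = Half w v"
                using y(2) by simp
              then show ?thesis
                using component_of_self[OF y(1)] by simp
            qed
          qed
        next
          case False
          define S where "S = {v \<in> V. Port v 0 \<in> X}"
          define T where "T = {v \<in> V. Port v 0 \<notin> X \<and> (\<forall>w. E v w \<longrightarrow> Half v w \<in> X)}"
          have S_T: "S \<subseteq> V" "T \<subseteq> V" "S \<inter> T = {}"
            unfolding S_def T_def by auto
          interpret gadget_cut V E k S T
            using graph k_pos no_isolated S_T by unfold_locales auto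
          have "X = {Port v i | v i. v \<in> S \<and> i < k} \<union> {Half v w | v w. v \<in> T \<and> E v w}"
            unfolding S_def T_def
          proof (rule gadget_subset_normal_form[OF X])
            show "Port v 0 \<in> X" if "Port v i \<in> X" "i < k" for v i
              using that no_port k_pos by force
            show "Port v i \<in> X" if "Port v 0 \<in> X" "i < k" for v i
              using that no_port k_pos by force
          qed (use no_half_port False in_V in blast)+
          then have "X = cut"
            by (simp add: cut_def)
          then show ?thesis
            using card_odd_components_rest_le_card_cut[OF cond[OF S_T] min_deg]
            unfolding rest_def by simp
        qed
      qed
    qed
  qed
  then show ?thesis
    unfolding tutte_condition_def by blast
qed

lemma finite_odd_comps: "finite V \<Longrightarrow> finite (odd_comps V E k S T)"
  unfolding odd_comps_def by (rule finite_subset[OF _ finite_components[of "V - (S \<union> T)" E]]) auto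

theorem has_k_factor_if_factor_condition:
  assumes "graph V E" and "1 \<le> k" and "\<And>v. v \<in> V \<Longrightarrow> k \<le> degree V E v"
    and "\<And>S T. S \<subseteq> V \<Longrightarrow> T \<subseteq> V \<Longrightarrow> S \<inter> T = {} \<Longrightarrow> factor_condition V E k S T"
  shows "has_k_factor V E k"
proof -
  have "has_perfect_matching (gadget_verts V E k) (gadget_adj E k)"
    using graph_gadget[OF assms(1)] tutte_condition_gadget[OF assms]
    by (rule has_perfect_matching_if_tutte_condition)
  then show ?thesis
    using has_k_factor_if_gadget_perfect_matching[OF assms(1)]
    unfolding has_perfect_matching_def by blast
qed

lemma odd_component_parity:
  assumes "graph V E" and "S \<subseteq> V" "T \<subseteq> V" "S \<inter> T = {}"
    and Q: "Q \<in> components (V - (S \<union> T)) E"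
    and F: "\<And>x y. F x y \<Longrightarrow> E x y" "symp F" "irreflp F"
    and deg: "\<And>v. v \<in> Q \<Longrightarrow> degree V F v = k"
  shows "odd (k * card Q + edges_between E Q T)
    \<longleftrightarrow> odd (edges_between F Q S + edges_between (\<lambda>x y. E x y \<and> \<not> F x y) Q T)"
proof -
  have fin: "finite V" "finite Q" "finite T"
    using graphD(1)[OF assms(1)] finite_component[OF _ Q] assms(3) finite_subset by blast+
  have QV: "Q \<subseteq> V"
    using components_subset[OF Q] by blast
  have "k * card Q = edges_between F Q V"
    using edges_between_eq_sum_degree[OF fin(1) QV] deg by simp
  also have "\<dots> = edges_between F Q Q + edges_between F Q S + edges_between F Q T"
    using edges_between_component_split[OF fin(1) assms(2-4) Q] F(1) by blast
  finally have "k * card Q = edges_between F Q Q + edges_between F Q S + edges_between F Q T" .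
  moreover have "(\<lambda>x y. E x y \<and> F x y) = F"
    using F(1) by (intro ext) auto
  then have "edges_between E Q T
      = edges_between F Q T + edges_between (\<lambda>x y. E x y \<and> \<not> F x y) Q T"
    using edges_between_split[OF fin(2,3), of E F] by simp
  moreover have "even (edges_between F Q Q)"
    using even_edges_between_self[OF fin(2) F(2,3)] .
  ultimately show ?thesis
    by auto
qed

lemma factor_condition_if_k_factor:
  assumes graph: "graph V E" and F: "\<And>x y. F x y \<Longrightarrow> E x y" and "graph V F"
    and deg: "\<And>v. v \<in> V \<Longrightarrow> degree V F v = k"
    and ST: "S \<subseteq> V" "T \<subseteq> V" "S \<inter> T = {}"
  shows "factor_condition V E k S T"
proof -
  let ?D = "\<lambda>x y. E x y \<and> \<not> F x y"
  let ?R = "V - (S \<union> T)"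
  let ?O = "odd_comps V E k S T"
  note fin = graphD(1)[OF graph]
  have symF: "symp F" and symD: "symp ?D"
    using graphD(2)[OF assms(3)] graphD(2)[OF graph] by (auto simp: symp_def)
  have finST: "finite S" "finite T" "finite ?R"
    using fin ST finite_subset by auto
  have fin_comps: "finite (components ?R E)"
    using finite_components finST(3) by blast
  have odd_edges: "1 \<le> edges_between F Q S + edges_between ?D Q T" if "Q \<in> ?O" for Q
  proof -
    have Q: "Q \<in> components ?R E"
      using that unfolding odd_comps_def by blast
    have "odd (k * card Q + edges_between E Q T)"
      using that unfolding odd_comps_def by blast
    moreover have "v \<in> Q \<Longrightarrow> degree V F v = k" for v
      using deg components_subset[OF Q] by blast
    ultimately have "odd (edges_between F Q S + edges_between ?D Q T)"
      using odd_component_parity[OF graph ST Q F symF graphD(3)[OF assms(3)]] by blast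
    then show ?thesis
      using odd_pos by fastforce
  qed
  have "q V E k S T = (\<Sum>Q\<in>?O. 1)"
    unfolding q_def by simp
  also have "\<dots> \<le> (\<Sum>Q\<in>?O. edges_between F Q S + edges_between ?D Q T)"
    using odd_edges by (rule sum_mono)
  also have "\<dots> \<le> (\<Sum>Q\<in>components ?R E. edges_between F Q S + edges_between ?D Q T)"
    using fin_comps by (intro sum_mono2) (auto simp: odd_comps_def)
  also have "\<dots> = edges_between F ?R S + edges_between ?D ?R T"
    using edges_between_Union_components[OF graphD(2)[OF graph] finST(3)] finST
    by (simp add: sum.distrib)
  also have "\<dots> = edges_between F S ?R + edges_between ?D T ?R"
    using edges_between_commute[OF symF] edges_between_commute[OF symD] by metis
  finally have q_le: "q V E k S T \<le> edges_between F S ?R + edges_between ?D T ?R" .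
  have "edges_between F S ?R + edges_between F S T = edges_between F S (?R \<union> T)"
    using finST by (subst edges_between_Un_right) auto
  also have "\<dots> \<le> edges_between F S V"
    unfolding edges_between_def
    by (rule card_mono[OF finite_edges_between_set[OF finST(1) fin]]) (use ST in auto)
  also have "\<dots> = (\<Sum>v\<in>S. k)"
    unfolding edges_between_eq_sum_degree[OF fin ST(1)] using deg ST(1) by (intro sum.cong) auto
  also have "\<dots> = k * card S"
    by simp
  finally have S_side: "edges_between F S ?R + edges_between F S T \<le> k * card S" .
  have deg_D: "card {b \<in> V. ?D v b} = degree V E v - k" if "v \<in> V" for v
  proof -
    have "card {b \<in> V. E v b} = card {b \<in> V. F v b} + card {b \<in> V. ?D v b}"
      using fin F by (subst card_Un_disjoint[symmetric]) (auto intro: arg_cong[where f = card])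
    then show ?thesis
      using deg[OF that] unfolding degree_def by simp
  qed
  have "edges_between ?D T ?R + edges_between ?D T S = edges_between ?D T (?R \<union> S)"
    using finST by (subst edges_between_Un_right) auto
  also have "\<dots> \<le> edges_between ?D T V"
    unfolding edges_between_def
    by (rule card_mono[OF finite_edges_between_set[OF finST(2) fin]]) (use ST in auto)
  also have "\<dots> = (\<Sum>v\<in>T. degree V E v - k)"
    using edges_between_eq_sum[OF finST(2) fin] deg_D ST(2) by (auto intro: sum.cong)
  also have "\<dots> = (\<Sum>v \<in> T \<inter> high V E k. degree V E v - k)"
    using finST(2) ST(2) by (intro sum.mono_neutral_right) (auto simp: high_def)
  finally have T_side: "edges_between ?D T ?R + edges_between ?D T S
      \<le> (\<Sum>v \<in> T \<inter> high V E k. degree V E v - k)" .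
  have "(\<lambda>x y. E x y \<and> F x y) = F"
    using F by (intro ext) auto
  then have "edges_between E S T = edges_between F S T + edges_between ?D T S"
    using edges_between_split[OF finST(1,2), of E F] edges_between_commute[OF symD] by simp
  then show ?thesis
    unfolding factor_condition_def using q_le S_side T_side by linarith
qed

lemma q_le_move_to_T:
  assumes graph: "graph V E" and "T \<subseteq> V" and "v \<in> S" and "v \<notin> T"
  shows "q V E k S T \<le> q V E k (S - {v}) (insert v T) + edges_between E {v} (V - (S \<union> T))"
proof -
  let ?R = "V - (S \<union> T)"
  let ?B = "{Q \<in> components ?R E. \<exists>u\<in>Q. E v u}"
  note fin = graphD(1)[OF graph] and sym = graphD(2)[OF graph]
  have R': "V - ((S - {v}) \<union> insert v T) = ?R"
    using assms(3) by blast
  have finR: "finite ?R" and finT: "finite T"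
    using fin assms(2) finite_subset by auto
  have odd_sub: "odd_comps V E k S T \<subseteq> odd_comps V E k (S - {v}) (insert v T) \<union> ?B"
  proof
    fix Q assume QO: "Q \<in> odd_comps V E k S T"
    then have Q: "Q \<in> components ?R E"
      unfolding odd_comps_def by blast
    show "Q \<in> odd_comps V E k (S - {v}) (insert v T) \<union> ?B"
    proof (cases "\<exists>u\<in>Q. E v u")
      case False
      have "finite Q"
        using finite_component[OF finR Q] .
      moreover have "edges_between E Q {v} = card {b \<in> Q. E v b}"
        using edges_between_commute[OF sym, of Q "{v}"] by (simp add: edges_between_singleton_left)
      moreover have "{b \<in> Q. E v b} = {}"
        using False by blast
      ultimately have "edges_between E Q (insert v T) = edges_between E Q T"
        using edges_between_Un_right[of Q "{v}" T E] finT assms(4) by simp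
      then show ?thesis
        using QO R' unfolding odd_comps_def by auto
    qed (use Q in blast)
  qed
  have "?B \<subseteq> component_of ?R E ` {u \<in> ?R. E v u}"
  proof
    fix Q assume "Q \<in> ?B"
    then obtain u where Q: "Q \<in> components ?R E" and u: "u \<in> Q" "E v u"
      by blast
    then have "u \<in> ?R" and "Q = component_of ?R E u"
      using components_subset[OF Q] components_eq_component_of[OF sym Q u(1)] by blast+
    then show "Q \<in> component_of ?R E ` {u \<in> ?R. E v u}"
      using u(2) by blast
  qed
  then have "card ?B \<le> card (component_of ?R E ` {u \<in> ?R. E v u})"
    using fin by (intro card_mono) auto
  also have "\<dots> \<le> card {u \<in> ?R. E v u}"
    using fin by (intro card_image_le) auto
  also have "\<dots> = edges_between E {v} ?R"
    by (simp add: edges_between_singleton_left)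
  finally have card_B: "card ?B \<le> edges_between E {v} ?R" .
  have "finite (odd_comps V E k (S - {v}) (insert v T) \<union> ?B)"
    using finite_components[OF finR] R' unfolding odd_comps_def by auto
  then have "q V E k S T \<le> card (odd_comps V E k (S - {v}) (insert v T) \<union> ?B)"
    unfolding q_def using odd_sub by (rule card_mono)
  also have "\<dots> \<le> q V E k (S - {v}) (insert v T) + card ?B"
    unfolding q_def by (rule card_Un_le)
  finally show ?thesis
    using card_B by linarith
qed

lemma factor_condition_move_to_T:
  assumes graph: "graph V E" and ST: "S \<subseteq> V" "T \<subseteq> V" "S \<inter> T = {}"
    and v: "v \<in> S" "degree V E v = k"
    and moved: "factor_condition V E k (S - {v}) (insert v T)"
  shows "factor_condition V E k S T"
proof -
  let ?R = "V - (S \<union> T)" and ?S' = "S - {v}"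
  note fin = graphD(1)[OF graph] and sym = graphD(2)[OF graph]
  have finite: "finite S" "finite T" "finite ?R" "finite ?S'"
    using fin ST finite_subset by auto
  have vT: "v \<notin> T"
    using v(1) ST(3) by blast
  have self: "edges_between E {v} {v} = 0"
    using graphD(3)[OF graph] by (simp add: edges_between_singleton_left irreflp_def)
  have "S \<union> T \<union> ?R = V"
    using ST by blast
  then have "k = edges_between E {v} (S \<union> T \<union> ?R)"
    using v(2) by (simp add: degree_def edges_between_singleton_left)
  also have "\<dots> = edges_between E {v} (S \<union> T) + edges_between E {v} ?R"
    using finite by (intro edges_between_Un_right) auto
  finally have deg_split: "k = edges_between E {v} S + edges_between E {v} T + edges_between E {v} ?R"
    using finite ST(3) edges_between_Un_right[of "{v}" S T E] by simp
  have "S = ?S' \<union> {v}"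
    using v(1) by blast
  then have e1: "edges_between E S T = edges_between E ?S' T + edges_between E {v} T"
    using finite edges_between_Un_left[of ?S' "{v}" T E] by simp
  have "edges_between E ?S' {v} = edges_between E {v} S"
    using edges_between_commute[OF sym, of ?S' "{v}"] self \<open>S = ?S' \<union> {v}\<close>
      edges_between_Un_right[of "{v}" ?S' "{v}" E] finite by simp
  then have e2: "edges_between E ?S' (insert v T) = edges_between E ?S' T + edges_between E {v} S"
    using edges_between_Un_right[of ?S' T "{v}" E] finite vT by simp
  have "insert v T \<inter> high V E k = T \<inter> high V E k"
    using v(2) unfolding high_def by auto
  moreover have "card S = Suc (card ?S')"
    using card_Suc_Diff1[OF finite(1) v(1)] by simp
  ultimately show ?thesis
    using moved q_le_move_to_T[OF graph ST(2) v(1) vT, of k] e1 e2 deg_split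
    unfolding factor_condition_def by (simp add: algebra_simps)
qed

lemma odd_comps_absorb_component:
  assumes graph: "graph V E" and ST: "S \<subseteq> V" "T \<subseteq> V" and QO: "Q \<in> odd_comps V E k S T"
  shows "odd_comps V E k S (T \<union> Q) = odd_comps V E k S T - {Q}"
proof -
  let ?R = "V - (S \<union> T)"
  note sym = graphD(2)[OF graph]
  have Q: "Q \<in> components ?R E"
    using QO unfolding odd_comps_def by blast
  have QR: "Q \<subseteq> ?R"
    using components_subset[OF Q] .
  have fin: "finite ?R" "finite T"
    using graphD(1)[OF graph] ST finite_subset by auto
  have comps: "components (V - (S \<union> (T \<union> Q))) E = components ?R E - {Q}"
  proof -
    have "V - (S \<union> (T \<union> Q)) = ?R - Q"
      by blast
    then show ?thesis
      using components_Diff_component[OF sym Q] by simp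
  qed
  have same_T: "edges_between E Q' (T \<union> Q) = edges_between E Q' T"
    if Q': "Q' \<in> components ?R E - {Q}" for Q'
  proof -
    have "Q' \<inter> Q = {}"
      using components_disjoint[OF sym _ Q] Q' by blast
    then have "edges_between E Q' Q = 0"
      using components_adj_closed[of Q' ?R E] Q' QR unfolding edges_between_def adj_closed_def
      by (auto simp: card_eq_0_iff)
    moreover have "T \<inter> Q = {}"
      using QR by blast
    moreover have "finite Q'"
      using finite_component[OF fin(1)] Q' by blast
    ultimately show ?thesis
      using edges_between_Un_right[of Q' T Q E] fin finite_component[OF fin(1) Q] by simp
  qed
  show ?thesis
  proof (rule set_eqI)
    fix Q'
    show "Q' \<in> odd_comps V E k S (T \<union> Q) \<longleftrightarrow> Q' \<in> odd_comps V E k S T - {Q}"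
      unfolding odd_comps_def comps using same_T[of Q']
      by (cases "Q' \<in> components ?R E - {Q}") auto
  qed
qed

lemma factor_condition_absorb_component:
  assumes graph: "graph V E" and ST: "S \<subseteq> V" "T \<subseteq> V" "S \<inter> T = {}"
    and min_deg: "\<And>v. v \<in> V \<Longrightarrow> k \<le> degree V E v"
    and QO: "Q \<in> odd_comps V E k S T" and low: "Q \<inter> high V E k = {}"
    and absorbed: "factor_condition V E k S (T \<union> Q)"
  shows "factor_condition V E k S T"
proof -
  let ?R = "V - (S \<union> T)"
  note sym = graphD(2)[OF graph]
  have Q: "Q \<in> components ?R E" and odd: "odd (k * card Q + edges_between E Q T)"
    using QO unfolding odd_comps_def by auto
  have QR: "Q \<subseteq> ?R"
    using components_subset[OF Q] .
  have fin: "finite S" "finite T" "finite Q" "finite (odd_comps V E k S T)"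
    using graphD(1)[OF graph] ST finite_subset finite_component[OF _ Q] finite_odd_comps by auto
  have "degree V E v = k" if "v \<in> Q" for v
    using that QR low min_deg[of v] unfolding high_def by fastforce
  then have "odd (edges_between E Q S + edges_between (\<lambda>x y. E x y \<and> \<not> E x y) Q T)"
    using odd_component_parity[OF graph ST Q _ sym graphD(3)[OF graph]] odd by blast
  then have "1 \<le> edges_between E S Q"
    using edges_between_commute[OF sym, of Q S] by (simp add: edges_between_def odd_pos Suc_leI)
  moreover have "edges_between E S (T \<union> Q) = edges_between E S T + edges_between E S Q"
    using fin QR by (intro edges_between_Un_right) auto
  moreover have "(T \<union> Q) \<inter> high V E k = T \<inter> high V E k"
    using low by blast
  moreover have "q V E k S T = Suc (q V E k S (T \<union> Q))"
    unfolding q_def odd_comps_absorb_component[OF graph ST(1,2) QO]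
    using card_Suc_Diff1[OF fin(4) QO] by simp
  ultimately show ?thesis
    using absorbed unfolding factor_condition_def by simp
qed

lemma factor_condition_if_restricted:
  assumes graph: "graph V E" and min_deg: "\<And>v. v \<in> V \<Longrightarrow> k \<le> degree V E v"
    and restricted: "\<And>S T. S \<subseteq> V \<Longrightarrow> T \<subseteq> V \<Longrightarrow> S \<inter> T = {} \<Longrightarrow> S \<subseteq> high V E k
      \<Longrightarrow> (\<forall>Q \<in> odd_comps V E k S T. Q \<inter> high V E k \<noteq> {}) \<Longrightarrow> factor_condition V E k S T"
    and ST: "S \<subseteq> V" "T \<subseteq> V" "S \<inter> T = {}"
  shows "factor_condition V E k S T"
  using ST
proof (induction "card (V - T)" arbitrary: S T rule: less_induct)
  case less
  note ST = less.prems
  have fin: "finite (V - T)"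
    using graphD(1)[OF graph] by blast
  show ?case
  proof (cases "S \<subseteq> high V E k")
    case False
    then obtain v where v: "v \<in> S" "v \<notin> high V E k"
      by blast
    then have "degree V E v = k"
      using ST min_deg[of v] unfolding high_def by fastforce
    moreover have "card (V - insert v T) < card (V - T)"
      using fin v(1) ST by (intro psubset_card_mono) auto
    then have "factor_condition V E k (S - {v}) (insert v T)"
      using v(1) ST by (intro less.hyps) auto
    ultimately show ?thesis
      using factor_condition_move_to_T[OF graph ST v(1)] by blast
  next
    case high: True
    show ?thesis
    proof (cases "\<exists>Q \<in> odd_comps V E k S T. Q \<inter> high V E k = {}")
      case True
      then obtain Q where QO: "Q \<in> odd_comps V E k S T" and low: "Q \<inter> high V E k = {}"
        by blast
      then have Q: "Q \<in> components (V - (S \<union> T)) E"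
        unfolding odd_comps_def by blast
      then have "Q \<noteq> {}" "Q \<subseteq> V - (S \<union> T)"
        using components_nonempty components_subset by blast+
      then have "card (V - (T \<union> Q)) < card (V - T)"
        using fin by (intro psubset_card_mono) auto
      then have "factor_condition V E k S (T \<union> Q)"
        using \<open>Q \<subseteq> V - (S \<union> T)\<close> ST by (intro less.hyps) auto
      then show ?thesis
        using factor_condition_absorb_component[OF graph ST min_deg QO low] by blast
    next
      case False
      then show ?thesis
        using restricted[OF ST high] by blast
    qed
  qed
qed

theorem lemma5:
  fixes V :: "'a set" and E :: "'a \<Rightarrow> 'a \<Rightarrow> bool" and k :: nat
  assumes "graph V E" and "k \<ge> 1" and "min_degree_eq V E k"
  shows "has_k_factor V E k \<longleftrightarrow>
    (\<forall>S T. S \<subseteq> V \<longrightarrow> T \<subseteq> V \<longrightarrow> S \<inter> T = {} \<longrightarrow>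
       S \<subseteq> high V E k \<longrightarrow>
       (\<forall>Q \<in> odd_comps V E k S T. Q \<inter> high V E k \<noteq> {}) \<longrightarrow>
       k * card S + (\<Sum>v \<in> T \<inter> high V E k. degree V E v - k)
         \<ge> q V E k S T + edges_between E S T)"
  (is "_ \<longleftrightarrow> (\<forall>S T. ?restricted S T)")
proof
  assume "has_k_factor V E k"
  then obtain F where F: "\<And>u v. F u v \<Longrightarrow> E u v" "graph V F" "\<And>v. v \<in> V \<Longrightarrow> degree V F v = k"
    unfolding has_k_factor_def by blast
  show "\<forall>S T. ?restricted S T"
  proof (intro allI impI)
    fix S T assume "S \<subseteq> V" "T \<subseteq> V" "S \<inter> T = {}"
    then show "k * card S + (\<Sum>v \<in> T \<inter> high V E k. degree V E v - k) \<ge> q V E k S T + edges_between E S T"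
      using factor_condition_if_k_factor[OF assms(1) F] unfolding factor_condition_def by blast
  qed
next
  assume restricted: "\<forall>S T. ?restricted S T"
  have min_deg: "\<And>v. v \<in> V \<Longrightarrow> k \<le> degree V E v"
    using assms(3) unfolding min_degree_eq_def by blast
  have "factor_condition V E k S T" if "S \<subseteq> V" "T \<subseteq> V" "S \<inter> T = {}" for S T
  proof (rule factor_condition_if_restricted[OF assms(1) min_deg _ that])
    fix S' T'
    assume "S' \<subseteq> V" "T' \<subseteq> V" "S' \<inter> T' = {}" "S' \<subseteq> high V E k"
      "\<forall>Q \<in> odd_comps V E k S' T'. Q \<inter> high V E k \<noteq> {}"
    then show "factor_condition V E k S' T'"
      using restricted[rule_format, of S' T'] unfolding factor_condition_def by blast
  qed
  then show "has_k_factor V E k"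
    using has_k_factor_if_factor_condition[OF assms(1,2) min_deg] by blast
qed

end
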